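(* Let $\mathbf{A}\in\mathbb{R}^{n\times n}$ and $\mathbf{C}_i\in\mathbb{R}^{r_i\times n}$ for $i=1,\dots,N$, and suppose the pair $(\mathbf{A},\mathbf{C})$ is observable, where $\mathbf{C}=[\mathbf{C}_1^T\ \cdots\ \mathbf{C}_N^T]^T$. Let the sequence of directed graphs $\{\mathcal{G}[k]\}_{k\ge 0}$ satisfy the joint strong-connectivity assumption with parameter $T$. Then for every $\rho\in(0,1)$ there exist observer gains $\mathbf{L}_1,\dots,\mathbf{L}_N$ (with $\mathbf{L}_j$ of compatible size) such that, when every node runs the freshness-index algorithm described in the context, for all initial states $\mathbf{z}[0]$ and all initial estimates $\hat{\mathbf{z}}_i[0]$ there is a constant $c\ge 0$ with $$\|\hat{\mathbf{z}}_i[k]-\mathbf{z}[k]\|\le c\,\rho^k\quad\text{for all } k\ge (2N-1)(N-1)T \text{ and all } i\in\mathcal{V}.$$ Consequently the state estimates $\hat{\mathbf{x}}_i[k]:=\mathbf{T}\hat{\mathbf{z}}_i[k]$ satisfy $\|\hat{\mathbf{x}}_i[k]-\mathbf{x}[k]\|\le \|\mathbf{T}\|\,c\,\rho^k$ for the same range of $k$, i.e. every node's estimation error converges to zero exponentially fast at rate $\rho$.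
   Context: Graphs. Nodes $\mathcal{V}=\{1,\dots,N\}$. At each time $k\in\mathbb{N}=\{0,1,2,\dots\}$ there is a directed graph $\mathcal{G}[k]=(\mathcal{V},\mathcal{E}[k])$; $(i,j)\in\mathcal{E}[k]$ means node $i$ can send information to node $j$ at time $k$. $\mathcal{N}_i[k]=\{l\neq i:(l,i)\in\mathcal{E}[k]\}$ is the set of neighbors of $i$ at time $k$. The union graph over an interval of times has vertex set $\mathcal{V}$ and edge set the union of the edge sets over that interval. Joint strong-connectivity assumption: there is $T\in\mathbb{N}_+=\{1,2,\dots\}$ such that for every $k\in\mathbb{N}$ the union graph over $[kT,(k+1)T)$ is strongly connected. System. $\mathbf{x}[k+1]=\mathbf{A}\mathbf{x}[k]$, $\mathbf{y}_i[k]=\mathbf{C}_i\mathbf{x}[k]$. Since $(\mathbf{A},\mathbf{C})$ is observable, there is an invertible $\mathbf{T}$ (fixed throughout) such that with $\mathbf{x}[k]=\mathbf{T}\mathbf{z}[k]$ one has $\mathbf{z}[k+1]=\bar{\mathbf{A}}\mathbf{z}[k]$, $\mathbf{y}_i[k]=\mathbf{C}_i\mathbf{T}\mathbf{z}[k]$, where $\mathbf{z}=[\mathbf{z}^{(1)T}\cdots\mathbf{z}^{(N)T}]^T$ with $\mathbf{z}^{(j)}\in\mathbb{R}^{n_j}$ ("substate $j$"), $\sum_j n_j=n$, $\bar{\mathbf{A}}=\mathbf{T}^{-1}\mathbf{A}\mathbf{T}$ is block lower triangular with blocks $\mathbf{A}_{jq}$ ($\mathbf{A}_{jq}=0$ for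 $q>j$), so $\mathbf{z}^{(j)}[k+1]=\mathbf{A}_{jj}\mathbf{z}^{(j)}[k]+\sum_{q=1}^{j-1}\mathbf{A}_{jq}\mathbf{z}^{(q)}[k]$; and $\mathbf{C}_i\mathbf{T}=[\mathbf{C}_{i1}\ \cdots\ \mathbf{C}_{ii}\ 0\ \cdots\ 0]$, so $\mathbf{y}_i[k]=\sum_{q=1}^{i}\mathbf{C}_{iq}\mathbf{z}^{(q)}[k]$; moreover each pair $(\mathbf{A}_{jj},\mathbf{C}_{jj})$ is observable. Node $j$ is called the source node of substate $j$. Freshness indices. For each substate $j$ and node $i$, node $i$ keeps $\tau^{(j)}_i[k]\in\{\omega\}\cup\mathbb{N}$, where $\omega$ is a special symbol. Initialization: $\tau^{(j)}_j[0]=0$, $\tau^{(j)}_i[0]=\omega$ for $i\neq j$. The source keeps $\tau^{(j)}_j[k]=0$ for all $k$. For $i\neq j$, let $\mathcal{M}^{(j)}_i[k]=\{l\in\mathcal{N}_i[k]:\tau^{(j)}_l[k]\neq\omega\}$. Case 1, $\tau^{(j)}_i[k]=\omega$: if $\mathcal{M}^{(j)}_i[k]\neq\emptyset$, let $u$ be any minimizer of $\tau^{(j)}_l[k]$ over $l\in\mathcal{M}^{(j)}_i[k]$, set $\tau^{(j)}_i[k+1]=\tau^{(j)}_u[k]+1$ and perform an "adopt-$u$" estimate update; otherwise set $\tau^{(j)}_i[k+1]=\omega$ and perform an "open-loop" estimate update. Case 2, $\tau^{(j)}_i[k]\neq\omega$: let $\mathcal{F}^{(j)}_i[k]=\{l\in\mathcal{M}^{(j)}_i[k]:\tau^{(j)}_l[k]<\tau^{(j)}_i[k]\}$;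 if nonempty, let $u$ be any minimizer of $\tau^{(j)}_l[k]$ over $\mathcal{F}^{(j)}_i[k]$, set $\tau^{(j)}_i[k+1]=\tau^{(j)}_u[k]+1$ and perform an adopt-$u$ update; otherwise set $\tau^{(j)}_i[k+1]=\tau^{(j)}_i[k]+1$ and perform an open-loop update. Estimates. Each node $i$ keeps $\hat{\mathbf{z}}_i[k]=[\hat{\mathbf{z}}^{(1)T}_i[k]\cdots\hat{\mathbf{z}}^{(N)T}_i[k]]^T$, with arbitrary initial value. Source update for substate $j$: $\hat{\mathbf{z}}^{(j)}_j[k+1]=(\mathbf{A}_{jj}-\mathbf{L}_j\mathbf{C}_{jj})\hat{\mathbf{z}}^{(j)}_j[k]+\sum_{q=1}^{j-1}(\mathbf{A}_{jq}-\mathbf{L}_j\mathbf{C}_{jq})\hat{\mathbf{z}}^{(q)}_j[k]+\mathbf{L}_j\mathbf{y}_j[k]$. Adopt-$u$ update at node $i\ne j$: $\hat{\mathbf{z}}^{(j)}_i[k+1]=\mathbf{A}_{jj}\hat{\mathbf{z}}^{(j)}_u[k]+\sum_{q=1}^{j-1}\mathbf{A}_{jq}\hat{\mathbf{z}}^{(q)}_i[k]$. Open-loop update at node $i\neq j$: $\hat{\mathbf{z}}^{(j)}_i[k+1]=\mathbf{A}_{jj}\hat{\mathbf{z}}^{(j)}_i[k]+\sum_{q=1}^{j-1}\mathbf{A}_{jq}\hat{\mathbf{z}}^{(q)}_i[k]$. These updates are carried out for every substate $j$ at every time $k$. *)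

theory Defs
  imports Main "Jordan_Normal_Form.Matrix"
begin

definition vnorm :: "real vec \<Rightarrow> real" where
  "vnorm v = sqrt (\<Sum>i<dim_vec v. (v $ i)^2)"

definition mat_opnorm :: "real mat \<Rightarrow> real" where
  "mat_opnorm M = Sup {vnorm (M *\<^sub>v v) | v. v \<in> carrier_vec (dim_col M) \<and> vnorm v \<le> 1}"

text \<open>Observability of the pair (A,C): the observability matrix
  [C; CA; ...; CA^(n-1)] has trivial kernel (full column rank).\<close>
definition observable :: "nat \<Rightarrow> real mat \<Rightarrow> real mat \<Rightarrow> bool" where
  "observable n A C \<longleftrightarrow> A \<in> carrier_mat n n \<and> dim_col C = n \<and>
     (\<forall>v \<in> carrier_vec n. (\<forall>k<n. C *\<^sub>v ((A ^\<^sub>m k) *\<^sub>v v) = 0\<^sub>v (dim_row C)) \<longrightarrow> v = 0\<^sub>v n)"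

definition off :: "(nat \<Rightarrow> nat) \<Rightarrow> nat \<Rightarrow> nat" where
  "off ns j = (\<Sum>q<j. ns q)"

text \<open>Stacked output matrix C = [C_0; C_1; ...; C_(N-1)] (C_i has r i rows, n columns).\<close>
fun stackC :: "(nat \<Rightarrow> nat) \<Rightarrow> (nat \<Rightarrow> real mat) \<Rightarrow> nat \<Rightarrow> nat \<Rightarrow> real mat" where
  "stackC r Cs 0 n = 0\<^sub>m 0 n"
| "stackC r Cs (Suc N) n = mat (off r (Suc N)) n
     (\<lambda>(a,b). if a < off r N then stackC r Cs N n $$ (a,b) else Cs N $$ (a - off r N, b))"

definition subv :: "(nat \<Rightarrow> nat) \<Rightarrow> real vec \<Rightarrow> nat \<Rightarrow> real vec" where
  "subv ns v j = vec (ns j) (\<lambda>a. v $ (off ns j + a))"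

definition blk :: "(nat \<Rightarrow> nat) \<Rightarrow> real mat \<Rightarrow> nat \<Rightarrow> nat \<Rightarrow> real mat" where
  "blk ns M j q = mat (ns j) (ns q) (\<lambda>(a,b). M $$ (off ns j + a, off ns q + b))"

text \<open>Column block q of a matrix (used for C_i T = [C_i0 ... C_i(N-1)]).\<close>
definition cblk :: "(nat \<Rightarrow> nat) \<Rightarrow> real mat \<Rightarrow> nat \<Rightarrow> real mat" where
  "cblk ns M q = mat (dim_row M) (ns q) (\<lambda>(a,b). M $$ (a, off ns q + b))"

definition coupling :: "(nat \<Rightarrow> nat) \<Rightarrow> real mat \<Rightarrow> real vec \<Rightarrow> nat \<Rightarrow> real vec" where
  "coupling ns Ab v j = finsum_vec TYPE(real) (ns j) (\<lambda>q. blk ns Ab j q *\<^sub>v subv ns v q) {..<j}"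

text \<open>Nodes are 0..N-1. E k is the edge set at time k; (l,i) \<in> E k means l can send to i.\<close>
definition nbrs :: "nat \<Rightarrow> (nat \<Rightarrow> (nat \<times> nat) set) \<Rightarrow> nat \<Rightarrow> nat \<Rightarrow> nat set" where
  "nbrs N E k i = {l. l < N \<and> l \<noteq> i \<and> (l, i) \<in> E k}"

definition strongly_connected :: "nat \<Rightarrow> (nat \<times> nat) set \<Rightarrow> bool" where
  "strongly_connected N R \<longleftrightarrow>
     (\<forall>a<N. \<forall>b<N. (a, b) \<in> (R \<inter> ({..<N} \<times> {..<N}))\<^sup>*)"

definition jointly_strongly_connected :: "nat \<Rightarrow> (nat \<Rightarrow> (nat \<times> nat) set) \<Rightarrow> nat \<Rightarrow> bool" where
  "jointly_strongly_connected N E T \<longleftrightarrow> T \<ge> 1 \<and>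
     (\<forall>k. strongly_connected N (\<Union>t \<in> {k*T..<(k+1)*T}. E t))"

section \<open>The freshness-index algorithm\<close>

text \<open>tau j i k : freshness index of node i for substate j at time k (None = omega).
  zh i k : estimate of node i at time k (a vector of dimension n in z-coordinates).
  Ab = T^{-1} A T, TC j = C_j * T, y j k = output of node j at time k, L j = gains.
  The minimizer u is any minimizer (all tie-breaking choices are allowed).\<close>

definition Mset :: "nat \<Rightarrow> (nat \<Rightarrow> (nat \<times> nat) set) \<Rightarrow> (nat \<Rightarrow> nat \<Rightarrow> nat \<Rightarrow> nat option)
                     \<Rightarrow> nat \<Rightarrow> nat \<Rightarrow> nat \<Rightarrow> nat set" where
  "Mset N E tau j i k = {l \<in> nbrs N E k i. tau j l k \<noteq> None}"

definition open_loop :: "(nat \<Rightarrow> nat) \<Rightarrow> real mat \<Rightarrow> (nat \<Rightarrow> nat \<Rightarrow> real vec) \<Rightarrow> nat \<Rightarrow> nat \<Rightarrow> nat \<Rightarrow> bool" where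
  "open_loop ns Ab zh j i k \<longleftrightarrow>
     subv ns (zh i (Suc k)) j = blk ns Ab j j *\<^sub>v subv ns (zh i k) j + coupling ns Ab (zh i k) j"

definition adopt :: "(nat \<Rightarrow> nat) \<Rightarrow> real mat \<Rightarrow> (nat \<Rightarrow> nat \<Rightarrow> real vec) \<Rightarrow> nat \<Rightarrow> nat \<Rightarrow> nat \<Rightarrow> nat \<Rightarrow> bool" where
  "adopt ns Ab zh j i u k \<longleftrightarrow>
     subv ns (zh i (Suc k)) j = blk ns Ab j j *\<^sub>v subv ns (zh u k) j + coupling ns Ab (zh i k) j"

definition adopt_min :: "nat \<Rightarrow> (nat \<Rightarrow> nat) \<Rightarrow> real mat \<Rightarrow> (nat \<Rightarrow> nat \<Rightarrow> nat \<Rightarrow> nat option)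
      \<Rightarrow> (nat \<Rightarrow> nat \<Rightarrow> real vec) \<Rightarrow> nat set \<Rightarrow> nat \<Rightarrow> nat \<Rightarrow> nat \<Rightarrow> bool" where
  "adopt_min N ns Ab tau zh S j i k \<longleftrightarrow>
     (\<exists>u \<in> S. (\<forall>l \<in> S. the (tau j u k) \<le> the (tau j l k)) \<and>
              tau j i (Suc k) = Some (the (tau j u k) + 1) \<and> adopt ns Ab zh j i u k)"

definition source_update :: "(nat \<Rightarrow> nat) \<Rightarrow> real mat \<Rightarrow> (nat \<Rightarrow> real mat) \<Rightarrow> (nat \<Rightarrow> real mat)
      \<Rightarrow> (nat \<Rightarrow> nat \<Rightarrow> real vec) \<Rightarrow> (nat \<Rightarrow> nat \<Rightarrow> real vec) \<Rightarrow> nat \<Rightarrow> nat \<Rightarrow> bool" where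
  "source_update ns Ab TC L y zh j k \<longleftrightarrow>
     subv ns (zh j (Suc k)) j =
       (blk ns Ab j j - L j * cblk ns (TC j) j) *\<^sub>v subv ns (zh j k) j
       + finsum_vec TYPE(real) (ns j)
           (\<lambda>q. (blk ns Ab j q - L j * cblk ns (TC j) q) *\<^sub>v subv ns (zh j k) q) {..<j}
       + L j *\<^sub>v y j k"

definition alg_run :: "nat \<Rightarrow> nat \<Rightarrow> (nat \<Rightarrow> (nat \<times> nat) set) \<Rightarrow> (nat \<Rightarrow> nat) \<Rightarrow> real mat
      \<Rightarrow> (nat \<Rightarrow> real mat) \<Rightarrow> (nat \<Rightarrow> real mat) \<Rightarrow> (nat \<Rightarrow> nat \<Rightarrow> real vec)
      \<Rightarrow> (nat \<Rightarrow> nat \<Rightarrow> nat \<Rightarrow> nat option) \<Rightarrow> (nat \<Rightarrow> nat \<Rightarrow> real vec) \<Rightarrow> bool" where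
  "alg_run N n E ns Ab TC L y tau zh \<longleftrightarrow>
     (\<forall>i<N. \<forall>k. zh i k \<in> carrier_vec n) \<and>
     (\<forall>j<N. \<forall>i<N. tau j i 0 = (if i = j then Some 0 else None)) \<and>
     (\<forall>j<N. \<forall>k. tau j j k = Some 0 \<and> source_update ns Ab TC L y zh j k) \<and>
     (\<forall>j<N. \<forall>i<N. \<forall>k. i \<noteq> j \<longrightarrow>
        (let M = Mset N E tau j i k in
         (case tau j i k of
            None \<Rightarrow>
              (if M \<noteq> {} then adopt_min N ns Ab tau zh M j i k
               else tau j i (Suc k) = None \<and> open_loop ns Ab zh j i k)
          | Some t \<Rightarrow>
              (let F = {l \<in> M. the (tau j l k) < t} in
               if F \<noteq> {} then adopt_min N ns Ab tau zh F j i k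
               else tau j i (Suc k) = Some (t + 1) \<and> open_loop ns Ab zh j i k))))"

end

theory Submission
  imports Defs "Jordan_Normal_Form.Determinant"
begin

text \<open>Each source gain \<open>L\<^sub>j\<close> is chosen deadbeat: observability of the block pair
  \<open>(A\<^sub>j\<^sub>j, C\<^sub>j\<^sub>j)\<close> yields \<open>L\<^sub>j\<close> with \<open>A\<^sub>j\<^sub>j - L\<^sub>j C\<^sub>j\<^sub>j\<close> nilpotent (Heymann's reduction to a single
  output followed by Ackermann's rank-one correction). Then induct on the substate \<open>j\<close>. Once the
  substates \<open>q < j\<close> are exact at every node, the source error on substate \<open>j\<close> is propagated by
  the nilpotent matrix and vanishes after \<open>n\<^sub>j\<close> steps; an estimate whose freshness index is \<open>t\<close>
  is the source estimate of \<open>t\<close> steps earlier pushed through the exact dynamics. By joint strong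
  connectivity the nodes holding sufficiently recent information gain a new member in every window
  of length \<open>T\<close>, so eventually all indices are small compared with \<open>k\<close> and every estimate equals
  \<open>z[k]\<close>. The finitely many earlier errors are absorbed into the constant \<open>c\<close>.\<close>

lemma index_mult_mat_vec_sum:
  "M \<in> carrier_mat a b \<Longrightarrow> v \<in> carrier_vec b \<Longrightarrow> i < a \<Longrightarrow>
   (M *\<^sub>v v) $ i = (\<Sum>j<b. M $$ (i,j) * v $ j)"
  by (auto simp: scalar_prod_def row_def atLeast0LessThan)

lemma mult_mat_vec_zero[simp]: "M \<in> carrier_mat a b \<Longrightarrow> M *\<^sub>v 0\<^sub>v b = (0\<^sub>v a :: real vec)"
  by (intro eq_vecI) (auto simp: scalar_prod_def)

lemma zero_mat_mult_vec[simp]: "v \<in> carrier_vec b \<Longrightarrow> 0\<^sub>m a b *\<^sub>v v = (0\<^sub>v a :: real vec)"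
  by (intro eq_vecI) (auto simp: scalar_prod_def)

lemma mult_mat_vec_carrier_iff[simp]: "(M :: real mat) *\<^sub>v v \<in> carrier_vec k \<longleftrightarrow> dim_row M = k"
  unfolding carrier_vec_def by simp

lemma pow_mat_mult_vec_carrier[simp]:
  "B \<in> carrier_mat n n \<Longrightarrow> v \<in> carrier_vec n \<Longrightarrow> B ^\<^sub>m j *\<^sub>v v \<in> carrier_vec n"
  by (rule mult_mat_vec_carrier[OF pow_carrier_mat])

lemma pow_mat_Suc_left:
  assumes B: "(B :: real mat) \<in> carrier_mat n n"
  shows "B ^\<^sub>m Suc t = B * B ^\<^sub>m t"
proof -
  have "B * B ^\<^sub>m t = B ^\<^sub>m t * B"
  proof (induction t)
    case 0 then show ?case using B by auto
  next
    case (Suc t)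
    have "B * B ^\<^sub>m Suc t = (B * B ^\<^sub>m t) * B"
      using B assoc_mult_mat[of B n n "B ^\<^sub>m t" n B n] by simp
    also have "\<dots> = B ^\<^sub>m Suc t * B" using Suc by simp
    finally show ?case .
  qed
  then show ?thesis by simp
qed

lemma pow_mat_Suc_mult_vec:
  "(B :: real mat) \<in> carrier_mat n n \<Longrightarrow> v \<in> carrier_vec n \<Longrightarrow> B ^\<^sub>m Suc t *\<^sub>v v = B *\<^sub>v (B ^\<^sub>m t *\<^sub>v v)"
  by (subst pow_mat_Suc_left) (auto simp: assoc_mult_mat_vec[of _ n n _ n])

lemma transpose_pow_mat:
  assumes B: "(B :: real mat) \<in> carrier_mat n n"
  shows "transpose_mat (B ^\<^sub>m t) = transpose_mat B ^\<^sub>m t"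
proof (induction t)
  case 0 then show ?case using B by auto
next
  case (Suc t)
  have "transpose_mat (B ^\<^sub>m Suc t) = transpose_mat B * transpose_mat (B ^\<^sub>m t)"
    using B transpose_mult[of "B ^\<^sub>m t" n n B n] by simp
  also have "\<dots> = transpose_mat B ^\<^sub>m Suc t"
    using Suc pow_mat_Suc_left[of "transpose_mat B" n t] B by simp
  finally show ?case .
qed

lemma mult_mat_unit_vec:
  assumes M: "(M :: real mat) \<in> carrier_mat a b" and i: "i < b"
  shows "M *\<^sub>v unit_vec b i = vec a (\<lambda>r. M $$ (r, i))"
proof (rule eq_vecI)
  fix r assume "r < dim_vec (vec a (\<lambda>r. M $$ (r, i)))"
  hence r: "r < a" by simp
  have "(M *\<^sub>v unit_vec b i) $ r = (\<Sum>j<b. M $$ (r,j) * unit_vec b i $ j)"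
    by (rule index_mult_mat_vec_sum[OF M _ r], auto)
  also have "\<dots> = (\<Sum>j<b. if j = i then M $$ (r,j) else 0)" by (rule sum.cong, auto simp: unit_vec_def)
  also have "\<dots> = M $$ (r,i)" using i by simp
  finally show "(M *\<^sub>v unit_vec b i) $ r = vec a (\<lambda>r. M $$ (r, i)) $ r" using r by simp
qed (use M in auto)

lemma invertible_if_trivial_kernel:
  fixes M :: "real mat"
  assumes M: "M \<in> carrier_mat m m"
    and ker: "\<And>v. v \<in> carrier_vec m \<Longrightarrow> M *\<^sub>v v = 0\<^sub>v m \<Longrightarrow> v = 0\<^sub>v m"
  shows "\<exists>Mi. Mi \<in> carrier_mat m m \<and> M * Mi = 1\<^sub>m m \<and> Mi * M = 1\<^sub>m m"
proof -
  have "det M \<noteq> 0" using det_0_iff_vec_prod_zero[OF M] ker by blast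
  from det_non_zero_imp_unit[OF M this, of "()"] show ?thesis
    unfolding Units_def ring_mat_def by auto
qed

lemma wide_mat_nontrivial_kernel:
  fixes P :: "real mat"
  assumes P: "P \<in> carrier_mat k m" and km: "k < m"
  shows "\<exists>v. v \<in> carrier_vec m \<and> v \<noteq> 0\<^sub>v m \<and> P *\<^sub>v v = 0\<^sub>v k"
proof -
  define Q where "Q = mat m m (\<lambda>(i,c). if i < k then P $$ (i,c) else 0)"
  have Q: "Q \<in> carrier_mat m m" unfolding Q_def by auto
  have m1: "m - 1 < m" using km by auto
  have "Q = mat\<^sub>r m m (\<lambda>i. if i = m - 1 then 0\<^sub>v m else row Q i)"
    by (rule eq_matI, insert km, auto simp: Q_def)
  also have "det \<dots> = 0" by (rule det_row_0[OF m1], auto simp: Q_def)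
  finally have "det Q = 0" .
  then obtain v where v: "v \<in> carrier_vec m" "v \<noteq> 0\<^sub>v m" "Q *\<^sub>v v = 0\<^sub>v m"
    using det_0_iff_vec_prod_zero[OF Q] by blast
  have "P *\<^sub>v v = 0\<^sub>v k"
  proof (rule eq_vecI)
    fix i assume "i < dim_vec (0\<^sub>v k :: real vec)"
    hence i: "i < k" by auto
    have "(Q *\<^sub>v v) $ i = (\<Sum>j<m. Q$$(i,j) * v$j)"
      by (rule index_mult_mat_vec_sum[OF Q v(1)]) (insert i km, auto)
    also have "\<dots> = (\<Sum>j<m. P$$(i,j) * v$j)" using i km by (simp add: Q_def)
    also have "\<dots> = (P *\<^sub>v v) $ i" by (rule index_mult_mat_vec_sum[OF P v(1) i, symmetric])
    finally show "(P *\<^sub>v v) $ i = 0\<^sub>v k $ i" using v(3) i km by auto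
  qed (insert P, auto)
  with v show ?thesis by auto
qed

section \<open>Deadbeat observer gains\<close>

definition lin_comb :: "nat \<Rightarrow> nat \<Rightarrow> (nat \<Rightarrow> real vec) \<Rightarrow> (nat \<Rightarrow> real) \<Rightarrow> real vec" where
  "lin_comb m k phi w = vec m (\<lambda>c. \<Sum>i<k. w i * phi i $ c)"

definition lin_indep_vecs :: "nat \<Rightarrow> nat \<Rightarrow> (nat \<Rightarrow> real vec) \<Rightarrow> bool" where
  "lin_indep_vecs m k phi \<longleftrightarrow> (\<forall>w. lin_comb m k phi w = 0\<^sub>v m \<longrightarrow> (\<forall>i<k. w i = 0))"

lemma lin_comb_carrier[simp]: "lin_comb m k phi w \<in> carrier_vec m" by (simp add: lin_comb_def)
lemma lin_comb_dim[simp]: "dim_vec (lin_comb m k phi w) = m" by (simp add: lin_comb_def)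

lemma lin_comb_minus: "lin_comb m k phi w1 - lin_comb m k phi w2 = lin_comb m k phi (\<lambda>i. w1 i - w2 i)"
  by (rule eq_vecI, auto simp: lin_comb_def algebra_simps sum_subtractf)

lemma lin_comb_smult: "a \<cdot>\<^sub>v lin_comb m k phi w = lin_comb m k phi (\<lambda>i. a * w i)"
  by (rule eq_vecI, auto simp: lin_comb_def algebra_simps sum_distrib_left)

lemma lin_comb_single:
  assumes "phi i \<in> carrier_vec m" "i < k"
  shows "phi i = lin_comb m k phi (\<lambda>j. if j = i then 1 else 0)"
proof (rule eq_vecI)
  fix a assume "a < dim_vec (lin_comb m k phi (\<lambda>j. if j = i then 1 else 0))"
  moreover have "(\<Sum>j<k. (if j = i then 1 else 0) * phi j $ a) = (\<Sum>j<k. (if j = i then phi j $ a else 0))"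
    by (rule sum.cong, auto)
  ultimately show "phi i $ a = lin_comb m k phi (\<lambda>j. if j = i then 1 else 0) $ a"
    using assms by (simp add: lin_comb_def)
qed (use assms in auto)

lemma lin_comb_Suc: "lin_comb m (Suc k) phi w = lin_comb m k phi w + w k \<cdot>\<^sub>v vec m (\<lambda>c. phi k $ c)"
  by (rule eq_vecI, auto simp: lin_comb_def)

lemma lin_comb_cong: "(\<And>i. i < k \<Longrightarrow> phi i = psi i) \<Longrightarrow> lin_comb m k phi w = lin_comb m k psi w"
  by (auto simp: lin_comb_def)

lemma mult_mat_lin_comb:
  assumes M: "M \<in> carrier_mat m m" and phi: "\<And>i. i < k \<Longrightarrow> phi i \<in> carrier_vec m"
    and W: "\<And>i. i < k \<Longrightarrow> M *\<^sub>v phi i = lin_comb m k phi (W i)"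
  shows "M *\<^sub>v lin_comb m k phi w = lin_comb m k phi (\<lambda>j. \<Sum>i<k. w i * W i j)"
proof (rule eq_vecI)
  fix a assume "a < dim_vec (lin_comb m k phi (\<lambda>j. \<Sum>i<k. w i * W i j))"
  hence a: "a < m" by simp
  have "(M *\<^sub>v lin_comb m k phi w) $ a = (\<Sum>c<m. M $$ (a,c) * (\<Sum>i<k. w i * phi i $ c))"
    by (subst index_mult_mat_vec_sum[OF M lin_comb_carrier a]) (simp add: lin_comb_def)
  also have "\<dots> = (\<Sum>i<k. w i * (\<Sum>c<m. M $$ (a,c) * phi i $ c))"
    by (simp add: sum_distrib_left algebra_simps, subst sum.swap, simp)
  also have "\<dots> = (\<Sum>i<k. w i * (M *\<^sub>v phi i) $ a)"
    by (rule sum.cong, simp, subst index_mult_mat_vec_sum[OF M phi a], auto)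
  also have "\<dots> = (\<Sum>i<k. w i * (\<Sum>j<k. W i j * phi j $ a))"
    by (rule sum.cong, simp, subst W, auto simp: lin_comb_def a)
  also have "\<dots> = (\<Sum>j<k. (\<Sum>i<k. w i * W i j) * phi j $ a)"
    by (simp add: sum_distrib_left sum_distrib_right algebra_simps, subst sum.swap, simp)
  finally show "(M *\<^sub>v lin_comb m k phi w) $ a = lin_comb m k phi (\<lambda>j. \<Sum>i<k. w i * W i j) $ a"
    using a by (simp add: lin_comb_def)
qed (use M in auto)

lemma scalar_prod_lin_comb:
  assumes v: "v \<in> carrier_vec m" and phi: "\<And>i. i < k \<Longrightarrow> phi i \<in> carrier_vec m"
  shows "lin_comb m k phi w \<bullet> v = (\<Sum>i<k. w i * (phi i \<bullet> v))"
proof -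
  have "lin_comb m k phi w \<bullet> v = (\<Sum>c<m. (\<Sum>i<k. w i * phi i $ c) * v $ c)"
    using v by (simp add: scalar_prod_def lin_comb_def atLeast0LessThan)
  also have "\<dots> = (\<Sum>i<k. w i * (phi i \<bullet> v))"
    using v phi by (simp add: scalar_prod_def atLeast0LessThan sum_distrib_left sum_distrib_right
        algebra_simps, subst sum.swap, simp)
  finally show ?thesis .
qed

lemma mat_of_cols_mult_vec:
  assumes w: "w \<in> carrier_vec m"
  shows "mat m m (\<lambda>(c,i). phi i $ c) *\<^sub>v w = lin_comb m m phi (\<lambda>i. w $ i)"
proof (rule eq_vecI)
  fix a assume "a < dim_vec (lin_comb m m phi (\<lambda>i. w $ i))"
  hence a: "a < m" by simp
  have "(mat m m (\<lambda>(c,i). phi i $ c) *\<^sub>v w) $ a = (\<Sum>i<m. mat m m (\<lambda>(c,i). phi i $ c) $$ (a,i) * w $ i)"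
    by (rule index_mult_mat_vec_sum[OF _ w a], auto)
  also have "\<dots> = (\<Sum>i<m. w $ i * phi i $ a)" using a by (auto intro: sum.cong)
  finally show "(mat m m (\<lambda>(c,i). phi i $ c) *\<^sub>v w) $ a = lin_comb m m phi (\<lambda>i. w $ i) $ a"
    using a by (simp add: lin_comb_def)
qed auto

lemma mat_of_cols_invertible:
  assumes indep: "lin_indep_vecs m m phi"
  shows "\<exists>Qi. Qi \<in> carrier_mat m m \<and> mat m m (\<lambda>(c,i). phi i $ c) * Qi = 1\<^sub>m m \<and>
                Qi * mat m m (\<lambda>(c,i). phi i $ c) = 1\<^sub>m m"
proof (rule invertible_if_trivial_kernel)
  fix w :: "real vec" assume w: "w \<in> carrier_vec m" "mat m m (\<lambda>(c,i). phi i $ c) *\<^sub>v w = 0\<^sub>v m"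
  then have "lin_comb m m phi (\<lambda>i. w $ i) = 0\<^sub>v m" by (simp add: mat_of_cols_mult_vec)
  with indep w(1) show "w = 0\<^sub>v m" unfolding lin_indep_vecs_def by (intro eq_vecI) auto
qed auto

lemma interpolating_mat_exists:
  assumes phi: "\<And>i. i < m \<Longrightarrow> phi i \<in> carrier_vec m" and indep: "lin_indep_vecs m m phi"
    and h: "\<And>i. i < m \<Longrightarrow> h i \<in> carrier_vec p"
  shows "\<exists>K \<in> carrier_mat p m. \<forall>i<m. K *\<^sub>v phi i = h i"
proof -
  define P where "P = mat m m (\<lambda>(c,i). phi i $ c)"
  have P: "P \<in> carrier_mat m m" unfolding P_def by auto
  obtain Pi where Pi: "Pi \<in> carrier_mat m m" "Pi * P = 1\<^sub>m m"
    using mat_of_cols_invertible[OF indep] unfolding P_def by blast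
  define H where "H = mat p m (\<lambda>(r,i). h i $ r)"
  have H: "H \<in> carrier_mat p m" unfolding H_def by auto
  have "(H * Pi) *\<^sub>v phi i = h i" if i: "i < m" for i
  proof -
    have Pe: "P *\<^sub>v unit_vec m i = phi i"
      using mult_mat_unit_vec[OF P i] phi[OF i] i by (intro eq_vecI) (auto simp: P_def)
    have "Pi *\<^sub>v phi i = (Pi * P) *\<^sub>v unit_vec m i"
      unfolding Pe[symmetric] using Pi(1) P by (simp add: assoc_mult_mat_vec[of _ m m _ m])
    also have "\<dots> = unit_vec m i" using Pi(2) by simp
    finally have "(H * Pi) *\<^sub>v phi i = H *\<^sub>v unit_vec m i"
      using H Pi(1) phi[OF i] by (simp add: assoc_mult_mat_vec[of _ p m _ m])
    also have "\<dots> = h i"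
      using Pi mult_mat_unit_vec[OF H i] h[OF i] i by (intro eq_vecI) (auto simp: H_def)
    finally show ?thesis .
  qed
  moreover have "H * Pi \<in> carrier_mat p m" using H Pi by auto
  ultimately show ?thesis by blast
qed

text \<open>Dual form of the Heymann construction: from observability one builds a basis
  \<open>\<phi>\<^sub>0, \<dots>, \<phi>\<^sub>m\<^sub>-\<^sub>1\<close> with \<open>\<phi>\<^sub>0 \<in> range C\<^sup>T\<close> and \<open>\<phi>\<^sub>i\<^sub>+\<^sub>1 \<in> A\<^sup>T \<phi>\<^sub>i + range C\<^sup>T\<close>.\<close>

lemma krylov_chain_extend:
  fixes A C :: "real mat"
  assumes A: "A \<in> carrier_mat m m" and C: "C \<in> carrier_mat p m"
    and obs: "observable m A C"
    and km: "k < m"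
    and phi: "\<And>i. phi i \<in> carrier_vec m" and g: "\<And>i. g i \<in> carrier_vec p"
    and rec: "\<And>i. Suc i < k \<Longrightarrow> phi (Suc i) = transpose_mat A *\<^sub>v phi i + transpose_mat C *\<^sub>v g (Suc i)"
    and b: "b = (if k = 0 then 0\<^sub>v m else transpose_mat A *\<^sub>v phi (k - 1))"
  shows "\<exists>gn \<in> carrier_vec p. \<forall>w. b + transpose_mat C *\<^sub>v gn \<noteq> lin_comb m k phi w"
proof (rule ccontr)
  assume "\<not> ?thesis"
  hence H: "\<And>gn. gn \<in> carrier_vec p \<Longrightarrow> \<exists>w. b + transpose_mat C *\<^sub>v gn = lin_comb m k phi w" by blast
  have bc: "b \<in> carrier_vec m" using b A phi by auto
  obtain w0 where w0: "b = lin_comb m k phi w0" using H[of "0\<^sub>v p"] bc C by auto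
  have CT: "\<exists>w. transpose_mat C *\<^sub>v gn = lin_comb m k phi w" if gn: "gn \<in> carrier_vec p" for gn
  proof -
    obtain w1 where w1: "b + transpose_mat C *\<^sub>v gn = lin_comb m k phi w1" using H[OF gn] by blast
    have "transpose_mat C *\<^sub>v gn = (b + transpose_mat C *\<^sub>v gn) - b" using bc C gn by auto
    also have "\<dots> = lin_comb m k phi (\<lambda>i. w1 i - w0 i)" unfolding w1 by (simp only: w0 lin_comb_minus)
    finally show ?thesis by blast
  qed
  have "\<exists>W. transpose_mat A *\<^sub>v phi i = lin_comb m k phi W" if i: "i < k" for i
  proof (cases "Suc i < k")
    case True
    obtain w1 where w1: "transpose_mat C *\<^sub>v g (Suc i) = lin_comb m k phi w1" using CT[OF g] by blast
    have "transpose_mat A *\<^sub>v phi i = phi (Suc i) - transpose_mat C *\<^sub>v g (Suc i)"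
      using rec[OF True] A C phi g by auto
    also have "\<dots> = lin_comb m k phi (\<lambda>j. (if j = Suc i then 1 else 0) - w1 j)"
      unfolding w1 by (subst lin_comb_single[OF phi True], rule lin_comb_minus)
    finally show ?thesis by blast
  next
    case False
    with i have "i = k - 1" "k \<noteq> 0" by auto
    thus ?thesis using w0 b by auto
  qed
  then obtain W where W: "\<And>i. i < k \<Longrightarrow> transpose_mat A *\<^sub>v phi i = lin_comb m k phi (W i)" by metis
  have AT_span: "\<exists>w'. transpose_mat A *\<^sub>v lin_comb m k phi w = lin_comb m k phi w'" for w
    using mult_mat_lin_comb[of "transpose_mat A" m k phi W w] A phi W by auto
  define Phi where "Phi = mat k m (\<lambda>(i,c). phi i $ c)"
  have Phi: "Phi \<in> carrier_mat k m" unfolding Phi_def by auto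
  obtain v where v: "v \<in> carrier_vec m" "v \<noteq> 0\<^sub>v m" "Phi *\<^sub>v v = 0\<^sub>v k"
    using wide_mat_nontrivial_kernel[OF Phi km] by blast
  have orth: "phi i \<bullet> v = 0" if i: "i < k" for i
  proof -
    have "(Phi *\<^sub>v v) $ i = (\<Sum>c<m. Phi $$ (i,c) * v $ c)" by (rule index_mult_mat_vec_sum[OF Phi v(1) i])
    also have "\<dots> = phi i \<bullet> v" using i v(1) by (simp add: Phi_def scalar_prod_def atLeast0LessThan)
    finally show ?thesis using v(3) i by simp
  qed
  have span: "\<exists>w. (transpose_mat A ^\<^sub>m t) *\<^sub>v (transpose_mat C *\<^sub>v unit_vec p r) = lin_comb m k phi w"
    if r: "r < p" for r t
  proof (induction t)
    case 0
    then show ?case using CT[of "unit_vec p r"] r C A by auto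
  next
    case (Suc t)
    then show ?case using AT_span A C pow_mat_Suc_mult_vec[of "transpose_mat A" m] by fastforce
  qed
  have "\<forall>t<m. C *\<^sub>v (A ^\<^sub>m t *\<^sub>v v) = 0\<^sub>v (dim_row C)"
  proof (intro allI impI)
    fix t assume t: "t < m"
    show "C *\<^sub>v (A ^\<^sub>m t *\<^sub>v v) = 0\<^sub>v (dim_row C)"
    proof (rule eq_vecI)
      fix r assume "r < dim_vec (0\<^sub>v (dim_row C) :: real vec)"
      hence r: "r < p" using C by simp
      have Atv: "A ^\<^sub>m t *\<^sub>v v \<in> carrier_vec m" using A v(1) by simp
      have "(C *\<^sub>v (A ^\<^sub>m t *\<^sub>v v)) $ r = unit_vec p r \<bullet> (C *\<^sub>v (A ^\<^sub>m t *\<^sub>v v))"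
        using r C Atv by simp
      also have "\<dots> = (transpose_mat C *\<^sub>v unit_vec p r) \<bullet> (A ^\<^sub>m t *\<^sub>v v)"
        by (rule transpose_vec_mult_scalar[symmetric, OF C Atv], use r in auto)
      also have "\<dots> = (transpose_mat (A ^\<^sub>m t) *\<^sub>v (transpose_mat C *\<^sub>v unit_vec p r)) \<bullet> v"
        by (rule transpose_vec_mult_scalar[symmetric, of _ m m], use A v C r in auto)
      also have "\<dots> = 0"
        using span[OF r, of t] scalar_prod_lin_comb[OF v(1), of k phi] orth phi transpose_pow_mat[OF A]
        by auto
      finally show "(C *\<^sub>v (A ^\<^sub>m t *\<^sub>v v)) $ r = 0\<^sub>v (dim_row C) $ r" using r C by simp
    qed (use C in auto)
  qed
  then have "v = 0\<^sub>v m" using obs v(1) unfolding observable_def by blast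
  with v(2) show False by simp
qed

lemma krylov_chain_exists:
  fixes A C :: "real mat"
  assumes A: "A \<in> carrier_mat m m" and C: "C \<in> carrier_mat p m" and obs: "observable m A C"
  shows "k \<le> m \<Longrightarrow> \<exists>phi g. (\<forall>i. phi i \<in> carrier_vec m) \<and> (\<forall>i. g i \<in> carrier_vec p) \<and>
    phi 0 = transpose_mat C *\<^sub>v g 0 \<and>
    (\<forall>i. Suc i < k \<longrightarrow> phi (Suc i) = transpose_mat A *\<^sub>v phi i + transpose_mat C *\<^sub>v g (Suc i)) \<and>
    lin_indep_vecs m k phi"
proof (induction k)
  case 0
  show ?case
    by (rule exI[of _ "\<lambda>_. 0\<^sub>v m"], rule exI[of _ "\<lambda>_. 0\<^sub>v p"], use C in \<open>auto simp: lin_indep_vecs_def\<close>)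
next
  case (Suc k)
  then obtain phi g where phi: "\<And>i. phi i \<in> carrier_vec m" and g: "\<And>i. g i \<in> carrier_vec p"
    and p0: "phi 0 = transpose_mat C *\<^sub>v g 0"
    and rec: "\<And>i. Suc i < k \<Longrightarrow> phi (Suc i) = transpose_mat A *\<^sub>v phi i + transpose_mat C *\<^sub>v g (Suc i)"
    and ind: "lin_indep_vecs m k phi" by auto
  define b where "b = (if k = 0 then 0\<^sub>v m else transpose_mat A *\<^sub>v phi (k - 1))"
  have bc: "b \<in> carrier_vec m" using b_def A phi by auto
  obtain gn where gn: "gn \<in> carrier_vec p" and new: "\<And>w. b + transpose_mat C *\<^sub>v gn \<noteq> lin_comb m k phi w"
    using krylov_chain_extend[OF A C obs, of k phi g b] Suc.prems phi g rec b_def by auto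
  define nv where "nv = b + transpose_mat C *\<^sub>v gn"
  have nv: "nv \<in> carrier_vec m" using bc gn C by (auto simp: nv_def)
  define phi' where "phi' = phi(k := nv)"
  define g' where "g' = g(k := gn)"
  have phi': "\<And>i. phi' i \<in> carrier_vec m" using phi nv by (auto simp: phi'_def)
  have g': "\<And>i. g' i \<in> carrier_vec p" using g gn by (auto simp: g'_def)
  have p0': "phi' 0 = transpose_mat C *\<^sub>v g' 0"
    using p0 gn C by (cases "k = 0") (auto simp: phi'_def g'_def nv_def b_def)
  have rec': "phi' (Suc i) = transpose_mat A *\<^sub>v phi' i + transpose_mat C *\<^sub>v g' (Suc i)"
    if i: "Suc i < Suc k" for i
  proof (cases "Suc i < k")
    case True
    then show ?thesis using rec[OF True] by (auto simp: phi'_def g'_def)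
  next
    case False
    with i have "Suc i = k" by auto
    then show ?thesis by (auto simp: phi'_def g'_def nv_def b_def)
  qed
  have "\<forall>i<Suc k. w i = 0" if w: "lin_comb m (Suc k) phi' w = 0\<^sub>v m" for w
  proof -
    have split: "lin_comb m (Suc k) phi' w = lin_comb m k phi w + w k \<cdot>\<^sub>v nv"
    proof -
      have "lin_comb m (Suc k) phi' w = lin_comb m k phi' w + w k \<cdot>\<^sub>v vec m (\<lambda>c. phi' k $ c)"
        by (rule lin_comb_Suc)
      also have "lin_comb m k phi' w = lin_comb m k phi w" by (rule lin_comb_cong, auto simp: phi'_def)
      also have "vec m (\<lambda>c. phi' k $ c) = nv" using nv by (auto simp: phi'_def)
      finally show ?thesis .
    qed
    have wk: "w k = 0"
    proof (rule ccontr)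
      assume wk: "w k \<noteq> 0"
      have "nv = (- 1 / w k) \<cdot>\<^sub>v lin_comb m k phi w"
      proof (rule eq_vecI)
        fix a assume "a < dim_vec ((- 1 / w k) \<cdot>\<^sub>v lin_comb m k phi w)"
        hence a: "a < m" by simp
        from arg_cong[OF w[unfolded split], of "\<lambda>x. x $ a"]
        have "lin_comb m k phi w $ a + w k * nv $ a = 0" using a nv by simp
        thus "nv $ a = ((- 1 / w k) \<cdot>\<^sub>v lin_comb m k phi w) $ a" using a wk by (simp add: field_simps)
      qed (use nv in auto)
      hence "nv = lin_comb m k phi (\<lambda>i. (- 1 / w k) * w i)" by (simp add: lin_comb_smult)
      thus False using new unfolding nv_def by blast
    qed
    have "lin_comb m k phi w = lin_comb m k phi w + w k \<cdot>\<^sub>v nv" by (rule eq_vecI) (use nv wk in auto)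
    hence "lin_comb m k phi w = 0\<^sub>v m" using w split by simp
    with ind wk show ?thesis unfolding lin_indep_vecs_def using less_Suc_eq by auto
  qed
  then show ?case using phi' g' p0' rec' unfolding lin_indep_vecs_def by blast
qed

lemma output_injection_shifts_chain:
  fixes A C :: "real mat"
  assumes A: "A \<in> carrier_mat m m" and C: "C \<in> carrier_mat p m"
    and phi: "\<And>i. phi i \<in> carrier_vec m" and g: "\<And>i. g i \<in> carrier_vec p"
    and rec: "\<And>i. Suc i < m \<Longrightarrow> phi (Suc i) = transpose_mat A *\<^sub>v phi i + transpose_mat C *\<^sub>v g (Suc i)"
    and indep: "lin_indep_vecs m m phi"
  shows "\<exists>L0 \<in> carrier_mat m p. \<forall>i. Suc i < m \<longrightarrow> transpose_mat (A - L0 * C) *\<^sub>v phi i = phi (Suc i)"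
proof -
  have "\<exists>K \<in> carrier_mat p m. \<forall>i<m. K *\<^sub>v phi i = (if Suc i < m then - g (Suc i) else 0\<^sub>v p)"
    by (rule interpolating_mat_exists) (use phi indep g in auto)
  then obtain K where K: "K \<in> carrier_mat p m"
    and Kphi: "\<And>i. i < m \<Longrightarrow> K *\<^sub>v phi i = (if Suc i < m then - g (Suc i) else 0\<^sub>v p)"
    by blast
  have AKC: "transpose_mat (A - transpose_mat K * C) = transpose_mat A - transpose_mat C * K"
  proof -
    have "transpose_mat (transpose_mat K * C) = transpose_mat C * K"
      using transpose_mult[of "transpose_mat K" m p C m] K C by simp
    then show ?thesis using transpose_minus[of A m m "transpose_mat K * C"] A K C by simp
  qed
  have "transpose_mat (A - transpose_mat K * C) *\<^sub>v phi i = phi (Suc i)" if i: "Suc i < m" for i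
  proof -
    have Kphi_i: "K *\<^sub>v phi i = - g (Suc i)" using Kphi[of i] i by simp
    have "(transpose_mat A - transpose_mat C * K) *\<^sub>v phi i
        = transpose_mat A *\<^sub>v phi i - transpose_mat C *\<^sub>v (K *\<^sub>v phi i)"
      using minus_mult_distrib_mat_vec[of "transpose_mat A" m m "transpose_mat C * K" "phi i"]
        assoc_mult_mat_vec[of "transpose_mat C" m p K m "phi i"] A C K phi[of i] by simp
    also have "\<dots> = phi (Suc i)"
    proof (rule eq_vecI)
      fix a assume "a < dim_vec (phi (Suc i))"
      then show "(transpose_mat A *\<^sub>v phi i - transpose_mat C *\<^sub>v (K *\<^sub>v phi i)) $ a = phi (Suc i) $ a"
        unfolding Kphi_i rec[OF i] using A C g[of "Suc i"] phi by simp
    qed (use A C phi[of "Suc i"] in simp)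
    finally show ?thesis unfolding AKC .
  qed
  moreover have "transpose_mat K \<in> carrier_mat m p" using K by auto
  ultimately show ?thesis by blast
qed

lemma pow_mat_vanishes_on_shift_chain:
  fixes F :: "real mat"
  assumes F: "F \<in> carrier_mat m m" and v: "\<And>j. v j \<in> carrier_vec m"
    and step: "\<And>j. Suc j < m \<Longrightarrow> F *\<^sub>v v j = v (Suc j)" and last: "F *\<^sub>v v (m - 1) = 0\<^sub>v m"
  shows "j < m \<Longrightarrow> m \<le> t + j \<Longrightarrow> F ^\<^sub>m t *\<^sub>v v j = 0\<^sub>v m"
proof (induction t arbitrary: j)
  case 0 then show ?case by simp
next
  case (Suc t)
  have eq: "F ^\<^sub>m Suc t *\<^sub>v v j = F ^\<^sub>m t *\<^sub>v (F *\<^sub>v v j)"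
    using F v by (simp add: assoc_mult_mat_vec[of _ m m _ m])
  show ?case
  proof (cases "Suc j < m")
    case True
    then show ?thesis using eq step Suc by simp
  next
    case False
    with Suc.prems have "j = m - 1" by simp
    then show ?thesis using eq last F by simp
  qed
qed

lemma mat_eq_zero_if_vanishes_on_basis:
  fixes F :: "real mat"
  assumes F: "F \<in> carrier_mat p m" and v: "\<And>j. j < m \<Longrightarrow> v j \<in> carrier_vec m"
    and indep: "lin_indep_vecs m m v" and vanish: "\<And>j. j < m \<Longrightarrow> F *\<^sub>v v j = 0\<^sub>v p"
  shows "F = 0\<^sub>m p m"
proof -
  define Q where "Q = mat m m (\<lambda>(c,i). v i $ c)"
  obtain Qi where Qi: "Qi \<in> carrier_mat m m" "Q * Qi = 1\<^sub>m m"
    using mat_of_cols_invertible[OF indep] unfolding Q_def by blast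
  have FQ: "F * Q = 0\<^sub>m p m"
  proof (rule mat_col_eqI)
    fix j assume "j < dim_col (0\<^sub>m p m :: real mat)"
    hence j: "j < m" by simp
    have "col (F * Q) j = F *\<^sub>v col Q j" by (rule col_mult2[OF F _ j]) (simp add: Q_def)
    also have "col Q j = v j" using j v[OF j] by (intro eq_vecI) (auto simp: Q_def)
    finally show "col (F * Q) j = col (0\<^sub>m p m) j" using j vanish[OF j] by simp
  qed (use F in \<open>auto simp: Q_def\<close>)
  have "F = F * (Q * Qi)" using Qi F by simp
  also have "\<dots> = (F * Q) * Qi" using F Qi by (simp add: Q_def assoc_mult_mat[of _ p m _ m _ m])
  finally show ?thesis unfolding FQ using Qi by simp
qed

text \<open>The Hankel matrix \<open>(D (i + j))\<^sub>i\<^sub>,\<^sub>j\<close> is anti-triangular with ones on the anti-diagonal.\<close>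

lemma hankel_anti_triangular_kernel:
  fixes D d :: "nat \<Rightarrow> real"
  assumes D: "\<And>n. n < m \<Longrightarrow> D n = (if n = m - 1 then 1 else 0)"
    and eq: "\<And>i. i < m \<Longrightarrow> (\<Sum>j<m. d j * D (i + j)) = 0"
    and j: "j < m"
  shows "d j = 0"
proof -
  have "d (m - 1 - s) = 0" if "s < m" for s
    using that
  proof (induction s rule: less_induct)
    case (less s)
    have "0 = (\<Sum>j<m. d j * D (s + j))" using eq[OF less.prems] by simp
    also have "\<dots> = (\<Sum>j<m. if j = m - 1 - s then d j else 0)"
    proof (rule sum.cong)
      fix j assume "j \<in> {..<m}"
      hence j: "j < m" by simp
      show "d j * D (s + j) = (if j = m - 1 - s then d j else 0)"
      proof (cases "m - 1 - s \<le> j")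
        case True
        then show ?thesis
          using less.IH[of "m - 1 - j"] less.prems j D[of "s + j"] by (cases "j = m - 1 - s") auto
      next
        case False
        then show ?thesis using D[of "s + j"] less.prems by simp
      qed
    qed simp
    also have "\<dots> = d (m - 1 - s)" using less.prems by simp
    finally show ?case by simp
  qed
  from this[of "m - 1 - j"] j show ?thesis by simp
qed

text \<open>Ackermann-type rank-one correction: if \<open>c, A\<^sup>T c, \<dots>, (A\<^sup>T)\<^sup>m\<^sup>-\<^sup>1 c\<close> is a basis, then for the
  dual vector \<open>q\<close> of its last element the vectors \<open>A\<^sup>j q\<close> form a basis that \<open>A - \<ell> c\<^sup>T\<close>
  shifts, where \<open>\<ell> = A\<^sup>m q\<close>.\<close>

lemma single_output_deadbeat:
  fixes A :: "real mat"
  assumes A: "A \<in> carrier_mat m m" and m0: "0 < m"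
    and phi: "\<And>i. phi i \<in> carrier_vec m" and indep: "lin_indep_vecs m m phi"
    and shift: "\<And>i. Suc i < m \<Longrightarrow> transpose_mat A *\<^sub>v phi i = phi (Suc i)"
  shows "\<exists>ell \<in> carrier_vec m. (A - mat m m (\<lambda>(a,b). ell $ a * phi 0 $ b)) ^\<^sub>m m = 0\<^sub>m m m"
proof -
  obtain K where K: "K \<in> carrier_mat 1 m"
    and Kphi: "\<And>i. i < m \<Longrightarrow> K *\<^sub>v phi i = vec 1 (\<lambda>_. if i = m - 1 then 1 else 0)"
    using interpolating_mat_exists[OF phi indep, of "\<lambda>i. vec 1 (\<lambda>_. if i = m - 1 then 1 else 0)" 1]
    by auto
  define q where "q = row K 0"
  have q: "q \<in> carrier_vec m" using K unfolding q_def by auto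
  have phiq: "phi i \<bullet> q = (if i = m - 1 then 1 else 0)" if i: "i < m" for i
  proof -
    have "q \<bullet> phi i = (K *\<^sub>v phi i) $ 0" using K by (simp add: q_def)
    then show ?thesis using Kphi[OF i] comm_scalar_prod[OF q phi[of i]] by simp
  qed
  define D where "D = (\<lambda>n. phi 0 \<bullet> (A ^\<^sub>m n *\<^sub>v q))"
  have phiA: "phi i \<bullet> (A ^\<^sub>m j *\<^sub>v q) = D (i + j)" if "i < m" for i j
    using that
  proof (induction i arbitrary: j)
    case 0 then show ?case by (simp add: D_def)
  next
    case (Suc i)
    have "phi (Suc i) \<bullet> (A ^\<^sub>m j *\<^sub>v q) = (transpose_mat A *\<^sub>v phi i) \<bullet> (A ^\<^sub>m j *\<^sub>v q)"
      using shift[OF Suc.prems] by simp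
    also have "\<dots> = phi i \<bullet> (A *\<^sub>v (A ^\<^sub>m j *\<^sub>v q))"
      by (rule transpose_vec_mult_scalar[OF A]) (use A q phi in auto)
    also have "A *\<^sub>v (A ^\<^sub>m j *\<^sub>v q) = A ^\<^sub>m Suc j *\<^sub>v q"
      by (rule pow_mat_Suc_mult_vec[symmetric, OF A q])
    finally show ?case using Suc.IH[of "Suc j"] Suc.prems by simp
  qed
  have D_small: "D n = (if n = m - 1 then 1 else 0)" if n: "n < m" for n
    using phiA[OF n, of 0] phiq[OF n] A q by simp
  define ell where "ell = A ^\<^sub>m m *\<^sub>v q"
  have ell: "ell \<in> carrier_vec m" using A q unfolding ell_def by auto
  define F where "F = A - mat m m (\<lambda>(a,b). ell $ a * phi 0 $ b)"
  have F: "F \<in> carrier_mat m m" using A unfolding F_def by auto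
  have Fu: "F *\<^sub>v u = A *\<^sub>v u - (phi 0 \<bullet> u) \<cdot>\<^sub>v ell" if u: "u \<in> carrier_vec m" for u
  proof (rule eq_vecI)
    fix a assume "a < dim_vec (A *\<^sub>v u - (phi 0 \<bullet> u) \<cdot>\<^sub>v ell)"
    hence a: "a < m" using ell by simp
    have "(mat m m (\<lambda>(a,b). ell $ a * phi 0 $ b) *\<^sub>v u) $ a = (\<Sum>b<m. ell $ a * phi 0 $ b * u $ b)"
      using a u by (subst index_mult_mat_vec_sum[of _ m m]) auto
    also have "\<dots> = ell $ a * (phi 0 \<bullet> u)"
      using u by (simp add: scalar_prod_def atLeast0LessThan sum_distrib_left mult.assoc)
    finally show "(F *\<^sub>v u) $ a = (A *\<^sub>v u - (phi 0 \<bullet> u) \<cdot>\<^sub>v ell) $ a"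
      unfolding F_def using A u a ell by (simp add: minus_mult_distrib_mat_vec[of _ m m])
  qed (use F A ell in auto)
  define v where "v = (\<lambda>j. A ^\<^sub>m j *\<^sub>v q)"
  have v: "\<And>j. v j \<in> carrier_vec m" using A q unfolding v_def by auto
  have Av: "A *\<^sub>v v j = v (Suc j)" for j
    unfolding v_def by (rule pow_mat_Suc_mult_vec[symmetric, OF A q])
  have Dv: "D j = phi 0 \<bullet> v j" for j by (simp add: D_def v_def)
  have Fv: "F *\<^sub>v v j = v (Suc j) - D j \<cdot>\<^sub>v ell" for j
    using Fu[OF v, of j] by (simp only: Av Dv)
  have v_m: "v m = ell" by (simp add: v_def ell_def)
  have indep_v: "lin_indep_vecs m m v"
    unfolding lin_indep_vecs_def
  proof (intro allI impI)
    fix w l assume w: "lin_comb m m v w = 0\<^sub>v m" and l: "l < m"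
    have eq: "(\<Sum>j<m. w j * D (i + j)) = 0" if i: "i < m" for i
    proof -
      have "v j \<bullet> phi i = D (i + j)" for j
        using comm_scalar_prod[OF v[of j] phi[of i]] phiA[OF i, of j] by (simp add: v_def)
      then have "(\<Sum>j<m. w j * D (i + j)) = lin_comb m m v w \<bullet> phi i"
        using scalar_prod_lin_comb[OF phi[of i] v, where k = m and w = w] by simp
      then show ?thesis using w phi[of i] by simp
    qed
    show "w l = 0" by (rule hankel_anti_triangular_kernel[OF D_small eq l])
  qed
  have "F ^\<^sub>m m = 0\<^sub>m m m"
  proof (rule mat_eq_zero_if_vanishes_on_basis[OF _ _ indep_v])
    fix j assume j: "j < m"
    show "F ^\<^sub>m m *\<^sub>v v j = 0\<^sub>v m"
    proof (rule pow_mat_vanishes_on_shift_chain[OF F v _ _ j])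
      show "F *\<^sub>v v j = v (Suc j)" if "Suc j < m" for j
      proof -
        have "D j = 0" using D_small[of j] that by simp
        then show ?thesis using Fv[of j] v[of "Suc j"] ell by (intro eq_vecI) auto
      qed
      have "D (m - 1) = 1" using D_small[of "m - 1"] m0 by simp
      then show "F *\<^sub>v v (m - 1) = 0\<^sub>v m"
        using Fv[of "m - 1"] m0 v_m ell by (intro eq_vecI) auto
    qed simp
  qed (use F v in auto)
  then show ?thesis using ell unfolding F_def by blast
qed

lemma deadbeat_gain_exists:
  fixes A C :: "real mat"
  assumes A: "A \<in> carrier_mat m m" and C: "C \<in> carrier_mat p m" and obs: "observable m A C"
  shows "\<exists>L \<in> carrier_mat m p. (A - L * C) ^\<^sub>m m = 0\<^sub>m m m"
proof (cases "m = 0")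
  case True
  show ?thesis by (rule bexI[of _ "0\<^sub>m m p"], use True A C in auto)
next
  case False
  obtain phi g where phi: "\<And>i. phi i \<in> carrier_vec m" and g: "\<And>i. g i \<in> carrier_vec p"
    and phi0: "phi 0 = transpose_mat C *\<^sub>v g 0"
    and rec: "\<And>i. Suc i < m \<Longrightarrow> phi (Suc i) = transpose_mat A *\<^sub>v phi i + transpose_mat C *\<^sub>v g (Suc i)"
    and indep: "lin_indep_vecs m m phi"
    using krylov_chain_exists[OF A C obs, of m] by auto
  have "\<exists>L0 \<in> carrier_mat m p. \<forall>i. Suc i < m \<longrightarrow> transpose_mat (A - L0 * C) *\<^sub>v phi i = phi (Suc i)"
    by (rule output_injection_shifts_chain[OF A C]) (use phi g rec indep in auto)
  then obtain L0 where L0: "L0 \<in> carrier_mat m p"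
    and shift: "\<And>i. Suc i < m \<Longrightarrow> transpose_mat (A - L0 * C) *\<^sub>v phi i = phi (Suc i)"
    by blast
  have "\<exists>ell \<in> carrier_vec m. (A - L0 * C - mat m m (\<lambda>(a,b). ell $ a * phi 0 $ b)) ^\<^sub>m m = 0\<^sub>m m m"
    by (rule single_output_deadbeat[where phi = phi]) (use A L0 C False phi indep shift in auto)
  then obtain ell where ell: "ell \<in> carrier_vec m"
    and nil: "(A - L0 * C - mat m m (\<lambda>(a,b). ell $ a * phi 0 $ b)) ^\<^sub>m m = 0\<^sub>m m m"
    by blast
  define M where "M = mat m p (\<lambda>(a,r). ell $ a * g 0 $ r)"
  have M: "M \<in> carrier_mat m p" unfolding M_def by auto
  have MC: "M * C = mat m m (\<lambda>(a,b). ell $ a * phi 0 $ b)"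
  proof (rule eq_matI)
    fix a b assume ab: "a < dim_row (mat m m (\<lambda>(a,b). ell $ a * phi 0 $ b))"
      "b < dim_col (mat m m (\<lambda>(a,b). ell $ a * phi 0 $ b))"
    have "(M * C) $$ (a, b) = (\<Sum>r<p. ell $ a * g 0 $ r * C $$ (r, b))"
      using ab C by (simp add: M_def scalar_prod_def atLeast0LessThan)
    also have "\<dots> = ell $ a * (transpose_mat C *\<^sub>v g 0) $ b"
      using ab C g[of 0] by (simp add: scalar_prod_def atLeast0LessThan sum_distrib_left mult_ac)
    finally show "(M * C) $$ (a, b) = mat m m (\<lambda>(a,b). ell $ a * phi 0 $ b) $$ (a, b)"
      using ab unfolding phi0 by simp
  qed (use M C in auto)
  have "(L0 + M) * C = L0 * C + mat m m (\<lambda>(a,b). ell $ a * phi 0 $ b)"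
    using add_mult_distrib_mat[OF L0 M C] MC by simp
  then have "A - (L0 + M) * C = A - L0 * C - mat m m (\<lambda>(a,b). ell $ a * phi 0 $ b)"
    using A L0 C by (intro eq_matI) auto
  then show ?thesis using nil L0 M by (intro bexI[of _ "L0 + M"]) auto
qed

lemma off_0[simp]: "off ns 0 = 0" by (simp add: off_def)
lemma off_Suc[simp]: "off ns (Suc q) = off ns q + ns q" by (simp add: off_def)
lemma off_mono: "q \<le> q' \<Longrightarrow> off ns q \<le> off ns q'"
  unfolding off_def by (rule sum_mono2) auto
lemma sum_lessThan_add: "(\<Sum>c<a + b. f c) = (\<Sum>c<a. f c) + (\<Sum>c<b. f (a + c))" for a b :: nat
  by (induction b) (auto simp: add.assoc)

lemma sum_lessThan_off: "(\<Sum>c<off ns N. f c) = (\<Sum>q<N. \<Sum>b<ns q. f (off ns q + b))"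
  by (induction N) (auto simp: sum_lessThan_add)

lemma block_containing_index: "c < off ns N \<Longrightarrow> \<exists>q<N. off ns q \<le> c \<and> c < off ns q + ns q"
proof (induction N)
  case 0 then show ?case by simp
next
  case (Suc N)
  show ?case
  proof (cases "c < off ns N")
    case True then show ?thesis using Suc.IH by (meson less_SucI)
  next
    case False then show ?thesis using Suc.prems by (intro exI[of _ N]) auto
  qed
qed

lemma subv_carrier[simp]: "subv ns v j \<in> carrier_vec (ns j)" by (simp add: subv_def)
lemma subv_dim[simp]: "dim_vec (subv ns v j) = ns j" by (simp add: subv_def)
lemma subv_idx[simp]: "a < ns j \<Longrightarrow> subv ns v j $ a = v $ (off ns j + a)" by (simp add: subv_def)
lemma blk_carrier[simp]: "blk ns M j q \<in> carrier_mat (ns j) (ns q)" by (simp add: blk_def)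
lemma blk_idx[simp]: "a < ns j \<Longrightarrow> b < ns q \<Longrightarrow> blk ns M j q $$ (a,b) = M $$ (off ns j + a, off ns q + b)"
  by (simp add: blk_def)
lemma cblk_carrier[simp]: "cblk ns M q \<in> carrier_mat (dim_row M) (ns q)" by (simp add: cblk_def)
lemma cblk_idx[simp]: "a < dim_row M \<Longrightarrow> b < ns q \<Longrightarrow> cblk ns M q $$ (a,b) = M $$ (a, off ns q + b)"
  by (simp add: cblk_def)

lemma vec_eq_if_blocks_eq:
  assumes v: "v \<in> carrier_vec n" and w: "w \<in> carrier_vec n" and n: "off ns N = n"
    and eq: "\<And>q. q < N \<Longrightarrow> subv ns v q = subv ns w q"
  shows "v = w"
proof (rule eq_vecI)
  fix c assume "c < dim_vec w"
  hence c: "c < off ns N" using w n by simp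
  from block_containing_index[OF c] obtain q where q: "q < N" "off ns q \<le> c" "c < off ns q + ns q" by auto
  have "subv ns v q $ (c - off ns q) = subv ns w q $ (c - off ns q)" using eq[OF q(1)] by simp
  thus "v $ c = w $ c" using q by simp
qed (use v w in auto)

lemma mult_mat_vec_index_blocks:
  fixes M :: "real mat"
  assumes M: "M \<in> carrier_mat R n" and v: "v \<in> carrier_vec n" and n: "off ns N = n" and a: "a < R"
  shows "(M *\<^sub>v v) $ a = (\<Sum>q<N. (cblk ns M q *\<^sub>v subv ns v q) $ a)"
proof -
  have "(M *\<^sub>v v) $ a = (\<Sum>c<n. M $$ (a,c) * v $ c)" by (rule index_mult_mat_vec_sum[OF M v a])
  also have "\<dots> = (\<Sum>q<N. \<Sum>b<ns q. M $$ (a, off ns q + b) * v $ (off ns q + b))"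
    unfolding n[symmetric] by (rule sum_lessThan_off)
  also have "\<dots> = (\<Sum>q<N. (cblk ns M q *\<^sub>v subv ns v q) $ a)"
  proof (rule sum.cong)
    fix q assume "q \<in> {..<N}"
    have cb: "cblk ns M q \<in> carrier_mat R (ns q)" using cblk_carrier[of ns M q] M by simp
    have "(cblk ns M q *\<^sub>v subv ns v q) $ a = (\<Sum>b<ns q. cblk ns M q $$ (a,b) * subv ns v q $ b)"
      by (rule index_mult_mat_vec_sum[OF cb subv_carrier[of ns v q] a])
    also have "\<dots> = (\<Sum>b<ns q. M $$ (a, off ns q + b) * v $ (off ns q + b))"
      using a M by (intro sum.cong) auto
    finally show "(\<Sum>b<ns q. M $$ (a, off ns q + b) * v $ (off ns q + b)) = (cblk ns M q *\<^sub>v subv ns v q) $ a" by simp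
  qed simp
  finally show ?thesis .
qed

lemma cblk_mult_vec_index_blk:
  fixes M :: "real mat"
  assumes M: "M \<in> carrier_mat n n" and n: "off ns N = n" and j: "j < N" and a: "a < ns j"
    and s: "s \<in> carrier_vec (ns q)"
  shows "(cblk ns M q *\<^sub>v s) $ (off ns j + a) = (blk ns M j q *\<^sub>v s) $ a"
proof -
  have "off ns j + ns j \<le> n" using off_mono[of "Suc j" N ns] j n by simp
  hence jn: "off ns j + a < n" using a by simp
  have cb: "cblk ns M q \<in> carrier_mat n (ns q)" using cblk_carrier[of ns M q] M by simp
  have "(cblk ns M q *\<^sub>v s) $ (off ns j + a) = (\<Sum>b<ns q. cblk ns M q $$ (off ns j + a, b) * s $ b)"
    by (rule index_mult_mat_vec_sum[OF cb s jn])
  also have "\<dots> = (\<Sum>b<ns q. blk ns M j q $$ (a, b) * s $ b)"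
    using jn a M by (intro sum.cong) auto
  also have "\<dots> = (blk ns M j q *\<^sub>v s) $ a" by (rule index_mult_mat_vec_sum[symmetric, OF blk_carrier[of ns M j q] s a])
  finally show ?thesis .
qed

lemma blk_dims[simp]: "dim_row (blk ns M j q) = ns j" "dim_col (blk ns M j q) = ns q" by (auto simp: blk_def)
lemma cblk_dims[simp]: "dim_row (cblk ns M q) = dim_row M" "dim_col (cblk ns M q) = ns q" by (auto simp: cblk_def)

lemma finsum_vec_carrier: "finite S \<Longrightarrow> (\<And>q. q \<in> S \<Longrightarrow> f q \<in> carrier_vec d) \<Longrightarrow>
   finsum_vec TYPE(real) d f S \<in> carrier_vec d"
  by (rule finsum_vec_closed) auto

lemma index_finsum_vec_sum: "finite S \<Longrightarrow> (\<And>q. q \<in> S \<Longrightarrow> f q \<in> carrier_vec d) \<Longrightarrow> a < d \<Longrightarrow>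
   finsum_vec TYPE(real) d f S $ a = (\<Sum>q\<in>S. f q $ a)"
  by (rule index_finsum_vec) auto

lemma coupling_carrier: "coupling ns M v j \<in> carrier_vec (ns j)"
  unfolding coupling_def by (rule finsum_vec_carrier) auto

lemma coupling_dim[simp]: "dim_vec (coupling ns M v j) = ns j"
  using coupling_carrier[of ns M v j] by auto

lemma coupling_idx: "a < ns j \<Longrightarrow> coupling ns M v j $ a = (\<Sum>q<j. (blk ns M j q *\<^sub>v subv ns v q) $ a)"
  unfolding coupling_def by (rule index_finsum_vec_sum) auto

lemma coupling_cong: "(\<And>q. q < j \<Longrightarrow> subv ns v q = subv ns v' q) \<Longrightarrow> coupling ns M v j = coupling ns M v' j"
  by (intro eq_vecI) (auto simp: coupling_idx coupling_carrier[THEN carrier_vecD] intro!: sum.cong)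

lemma sum_lessThan_lower_triangular:
  fixes f :: "nat \<Rightarrow> real"
  assumes j: "j < N" and z: "\<And>q. q < N \<Longrightarrow> j < q \<Longrightarrow> f q = 0"
  shows "(\<Sum>q<N. f q) = f j + (\<Sum>q<j. f q)"
proof -
  have "(\<Sum>q<N. f q) = (\<Sum>q<Suc j. f q)"
    by (rule sum.mono_neutral_right) (use j z in auto)
  also have "\<dots> = f j + (\<Sum>q<j. f q)" by simp
  finally show ?thesis .
qed

lemma subv_mult_lower_block_triangular:
  fixes Ab :: "real mat"
  assumes Ab: "Ab \<in> carrier_mat n n" and n: "off ns N = n" and j: "j < N"
    and lowtri: "\<And>q. q < N \<Longrightarrow> j < q \<Longrightarrow> blk ns Ab j q = 0\<^sub>m (ns j) (ns q)"
    and v: "v \<in> carrier_vec n"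
  shows "subv ns (Ab *\<^sub>v v) j = blk ns Ab j j *\<^sub>v subv ns v j + coupling ns Ab v j"
proof (rule eq_vecI)
  fix a assume "a < dim_vec (blk ns Ab j j *\<^sub>v subv ns v j + coupling ns Ab v j)"
  hence a: "a < ns j" by simp
  have "off ns j + ns j \<le> n" using off_mono[of "Suc j" N ns] j n by simp
  hence jn: "off ns j + a < n" using a by simp
  have "subv ns (Ab *\<^sub>v v) j $ a = (Ab *\<^sub>v v) $ (off ns j + a)" using a by simp
  also have "\<dots> = (\<Sum>q<N. (cblk ns Ab q *\<^sub>v subv ns v q) $ (off ns j + a))"
    by (rule mult_mat_vec_index_blocks[OF Ab v n jn])
  also have "\<dots> = (\<Sum>q<N. (blk ns Ab j q *\<^sub>v subv ns v q) $ a)"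
    by (rule sum.cong, simp, rule cblk_mult_vec_index_blk[OF Ab n j a], simp)
  also have "\<dots> = (blk ns Ab j j *\<^sub>v subv ns v j) $ a + (\<Sum>q<j. (blk ns Ab j q *\<^sub>v subv ns v q) $ a)"
    by (rule sum_lessThan_lower_triangular[OF j], use lowtri a in simp)
  also have "\<dots> = (blk ns Ab j j *\<^sub>v subv ns v j + coupling ns Ab v j) $ a"
    using a coupling_carrier[of ns Ab v j] by (simp add: coupling_idx)
  finally show "subv ns (Ab *\<^sub>v v) j $ a = (blk ns Ab j j *\<^sub>v subv ns v j + coupling ns Ab v j) $ a" .
next
  show "dim_vec (subv ns (Ab *\<^sub>v v) j) = dim_vec (blk ns Ab j j *\<^sub>v subv ns v j + coupling ns Ab v j)"
    unfolding index_add_vec(2) coupling_dim subv_dim ..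
qed

lemma mult_mat_vec_lower_block_cols:
  fixes CT :: "real mat"
  assumes CT: "CT \<in> carrier_mat R n" and n: "off ns N = n" and j: "j < N"
    and shape: "\<And>q. q < N \<Longrightarrow> j < q \<Longrightarrow> cblk ns CT q = 0\<^sub>m R (ns q)"
    and v: "v \<in> carrier_vec n"
  shows "CT *\<^sub>v v = cblk ns CT j *\<^sub>v subv ns v j + finsum_vec TYPE(real) R (\<lambda>q. cblk ns CT q *\<^sub>v subv ns v q) {..<j}"
proof -
  have fc: "finsum_vec TYPE(real) R (\<lambda>q. cblk ns CT q *\<^sub>v subv ns v q) {..<j} \<in> carrier_vec R"
    by (rule finsum_vec_carrier) (use CT in auto)
  show ?thesis
  proof (rule eq_vecI)
    fix a assume "a < dim_vec (cblk ns CT j *\<^sub>v subv ns v j + finsum_vec TYPE(real) R (\<lambda>q. cblk ns CT q *\<^sub>v subv ns v q) {..<j})"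
    hence a: "a < R" using CT fc by simp
    have "(CT *\<^sub>v v) $ a = (\<Sum>q<N. (cblk ns CT q *\<^sub>v subv ns v q) $ a)"
      by (rule mult_mat_vec_index_blocks[OF CT v n a])
    also have "\<dots> = (cblk ns CT j *\<^sub>v subv ns v j) $ a + (\<Sum>q<j. (cblk ns CT q *\<^sub>v subv ns v q) $ a)"
      by (rule sum_lessThan_lower_triangular[OF j], use shape a in simp)
    also have "\<dots> = (cblk ns CT j *\<^sub>v subv ns v j + finsum_vec TYPE(real) R (\<lambda>q. cblk ns CT q *\<^sub>v subv ns v q) {..<j}) $ a"
      using a fc CT by (simp add: index_finsum_vec_sum)
    finally show "(CT *\<^sub>v v) $ a = (cblk ns CT j *\<^sub>v subv ns v j + finsum_vec TYPE(real) R (\<lambda>q. cblk ns CT q *\<^sub>v subv ns v q) {..<j}) $ a" .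
  next
    show "dim_vec (CT *\<^sub>v v) = dim_vec (cblk ns CT j *\<^sub>v subv ns v j + finsum_vec TYPE(real) R (\<lambda>q. cblk ns CT q *\<^sub>v subv ns v q) {..<j})"
      unfolding index_add_vec(2) carrier_vecD[OF fc] using CT by simp
  qed
qed

lemma finsum_vec_cong:
  assumes S: "finite S" and f: "f \<in> S \<rightarrow> carrier_vec d" and g: "g \<in> S \<rightarrow> carrier_vec d"
    and eq: "\<And>q. q \<in> S \<Longrightarrow> f q = g q"
  shows "finsum_vec TYPE(real) d f S = finsum_vec TYPE(real) d g S"
proof (rule eq_vecI)
  fix a assume "a < dim_vec (finsum_vec TYPE(real) d g S)"
  then have a: "a < d" using finsum_vec_closed[OF g] by simp
  show "finsum_vec TYPE(real) d f S $ a = finsum_vec TYPE(real) d g S $ a"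
    unfolding index_finsum_vec[OF S a f] index_finsum_vec[OF S a g] using eq by simp
qed (use finsum_vec_closed[OF f] finsum_vec_closed[OF g] in auto)

lemma index_mult_mat_finsum_vec:
  fixes L :: "real mat"
  assumes S: "finite S" and L: "L \<in> carrier_mat d e" and f: "f \<in> S \<rightarrow> carrier_vec e" and a: "a < d"
  shows "(L *\<^sub>v finsum_vec TYPE(real) e f S) $ a = (\<Sum>q\<in>S. (L *\<^sub>v f q) $ a)"
proof -
  have "(L *\<^sub>v finsum_vec TYPE(real) e f S) $ a = (\<Sum>b<e. L $$ (a,b) * (\<Sum>q\<in>S. f q $ b))"
    using index_mult_mat_vec_sum[OF L finsum_vec_closed[OF f] a] index_finsum_vec[OF S _ f] by simp
  also have "\<dots> = (\<Sum>q\<in>S. \<Sum>b<e. L $$ (a,b) * f q $ b)"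
    by (simp add: sum_distrib_left sum.swap[of _ S])
  also have "\<dots> = (\<Sum>q\<in>S. (L *\<^sub>v f q) $ a)"
    by (rule sum.cong[OF refl], rule index_mult_mat_vec_sum[OF L _ a, symmetric]) (use f in \<open>auto simp: Pi_iff\<close>)
  finally show ?thesis .
qed

lemma finsum_vec_mult_minus_distrib:
  fixes L :: "real mat"
  assumes S: "finite S" and L: "L \<in> carrier_mat d e"
    and P: "\<And>q. q \<in> S \<Longrightarrow> P q \<in> carrier_mat d (m q)"
    and R: "\<And>q. q \<in> S \<Longrightarrow> R q \<in> carrier_mat e (m q)"
    and w: "\<And>q. q \<in> S \<Longrightarrow> w q \<in> carrier_vec (m q)"
  shows "finsum_vec TYPE(real) d (\<lambda>q. (P q - L * R q) *\<^sub>v w q) S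
     = finsum_vec TYPE(real) d (\<lambda>q. P q *\<^sub>v w q) S - L *\<^sub>v finsum_vec TYPE(real) e (\<lambda>q. R q *\<^sub>v w q) S"
proof -
  have PLR: "(\<lambda>q. (P q - L * R q) *\<^sub>v w q) \<in> S \<rightarrow> carrier_vec d"
  proof
    fix q assume q: "q \<in> S"
    have "P q - L * R q \<in> carrier_mat d (m q)" using P[OF q] R[OF q] L by auto
    then show "(P q - L * R q) *\<^sub>v w q \<in> carrier_vec d" using w[OF q] by auto
  qed
  have Pw: "(\<lambda>q. P q *\<^sub>v w q) \<in> S \<rightarrow> carrier_vec d" using P w by (auto intro: mult_mat_vec_carrier)
  have Rw: "(\<lambda>q. R q *\<^sub>v w q) \<in> S \<rightarrow> carrier_vec e" using R w by (auto intro: mult_mat_vec_carrier)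
  show ?thesis
  proof (rule eq_vecI)
    fix a assume "a < dim_vec (finsum_vec TYPE(real) d (\<lambda>q. P q *\<^sub>v w q) S
      - L *\<^sub>v finsum_vec TYPE(real) e (\<lambda>q. R q *\<^sub>v w q) S)"
    then have a: "a < d" using L by simp
    have summand: "((P q - L * R q) *\<^sub>v w q) $ a = (P q *\<^sub>v w q) $ a - (L *\<^sub>v (R q *\<^sub>v w q)) $ a"
      if q: "q \<in> S" for q
      using P[OF q] R[OF q] L w[OF q] a
      by (simp add: minus_mult_distrib_mat_vec[of _ d "m q"] assoc_mult_mat_vec[of _ d e _ "m q"])
    have "finsum_vec TYPE(real) d (\<lambda>q. (P q - L * R q) *\<^sub>v w q) S $ a
        = (\<Sum>q\<in>S. ((P q - L * R q) *\<^sub>v w q) $ a)"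
      by (rule index_finsum_vec[OF S a PLR])
    also have "\<dots> = (\<Sum>q\<in>S. (P q *\<^sub>v w q) $ a - (L *\<^sub>v (R q *\<^sub>v w q)) $ a)"
      by (rule sum.cong[OF refl]) (rule summand)
    also have "\<dots> = finsum_vec TYPE(real) d (\<lambda>q. P q *\<^sub>v w q) S $ a
        - (L *\<^sub>v finsum_vec TYPE(real) e (\<lambda>q. R q *\<^sub>v w q) S) $ a"
      by (simp add: sum_subtractf index_finsum_vec[OF S a Pw] index_mult_mat_finsum_vec[OF S L Rw a])
    also have "\<dots> = (finsum_vec TYPE(real) d (\<lambda>q. P q *\<^sub>v w q) S
        - L *\<^sub>v finsum_vec TYPE(real) e (\<lambda>q. R q *\<^sub>v w q) S) $ a"
      using a L by simp
    finally show "finsum_vec TYPE(real) d (\<lambda>q. (P q - L * R q) *\<^sub>v w q) S $ a =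
      (finsum_vec TYPE(real) d (\<lambda>q. P q *\<^sub>v w q) S - L *\<^sub>v finsum_vec TYPE(real) e (\<lambda>q. R q *\<^sub>v w q) S) $ a" .
  qed (use L finsum_vec_closed[OF Pw] finsum_vec_closed[OF PLR] in auto)
qed

lemma cblk_carrier_mat: "M \<in> carrier_mat R c \<Longrightarrow> cblk ns M q \<in> carrier_mat R (ns q)"
  using cblk_carrier[of ns M q] carrier_matD(1)[of M R c] by (simp only:)

section \<open>Propagation of freshness indices\<close>

lemma rtrancl_exits_set:
  assumes "(x, y) \<in> R\<^sup>*" "x \<in> S" "y \<notin> S"
  shows "\<exists>a b. (a, b) \<in> R \<and> a \<in> S \<and> b \<notin> S"
  using assms
proof (induction rule: rtrancl_induct)
  case base then show ?case by simp
next
  case (step y z)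
  then show ?case by (cases "y \<in> S") auto
qed

locale freshness_indices =
  fixes N :: nat and E :: "nat \<Rightarrow> (nat \<times> nat) set" and Tp :: nat and j :: nat
    and tau :: "nat \<Rightarrow> nat \<Rightarrow> nat option"
  assumes joint: "jointly_strongly_connected N E Tp"
    and j: "j < N"
    and source_index: "\<And>k. tau j k = Some 0"
    and index_step: "\<And>i k t. i < N \<Longrightarrow> i \<noteq> j \<Longrightarrow> tau i k = Some t \<Longrightarrow>
      \<exists>t'. tau i (Suc k) = Some t' \<and> t' \<le> t + 1"
    and index_neighbour: "\<And>i k l s. i < N \<Longrightarrow> i \<noteq> j \<Longrightarrow> l \<in> nbrs N E k i \<Longrightarrow> tau l k = Some s \<Longrightarrow>
      \<exists>t'. tau i (Suc k) = Some t' \<and> t' \<le> s + 1"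
begin

text \<open>The estimate held by \<open>i\<close> at time \<open>k\<close> descends from the source estimate of a time \<open>\<ge> s\<close>.\<close>

definition informed_since :: "nat \<Rightarrow> nat \<Rightarrow> nat \<Rightarrow> bool" where
  "informed_since s k i \<longleftrightarrow> (\<exists>t. tau i k = Some t \<and> t + s \<le> k)"

lemma informed_since_Suc: "i < N \<Longrightarrow> informed_since s k i \<Longrightarrow> informed_since s (Suc k) i"
proof -
  assume i: "i < N" and g: "informed_since s k i"
  then obtain t where t: "tau i k = Some t" "t + s \<le> k" unfolding informed_since_def by auto
  show ?thesis
  proof (cases "i = j")
    case True
    then show ?thesis using source_index t unfolding informed_since_def by auto
  next
    case False
    from index_step[OF i False t(1)] obtain t' where "tau i (Suc k) = Some t'" "t' \<le> t + 1" by auto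
    then show ?thesis using t unfolding informed_since_def by auto
  qed
qed

lemma informed_since_mono:
  assumes i: "i < N" and g: "informed_since s k i" and kk: "k \<le> k'"
  shows "informed_since s k' i"
  using kk
proof (induction k' rule: dec_induct)
  case base then show ?case using g by simp
next
  case (step n) then show ?case using informed_since_Suc[OF i] by auto
qed

lemma informed_since_neighbour:
  "i < N \<Longrightarrow> l \<in> nbrs N E k i \<Longrightarrow> informed_since s k l \<Longrightarrow> informed_since s (Suc k) i"
proof -
  assume i: "i < N" and l: "l \<in> nbrs N E k i" and g: "informed_since s k l"
  then obtain t where t: "tau l k = Some t" "t + s \<le> k" unfolding informed_since_def by auto
  show ?thesis
  proof (cases "i = j")
    case True
    then show ?thesis using source_index t unfolding informed_since_def by auto
  next
    case False
    from index_neighbour[OF i False l t(1)] obtain t' where "tau i (Suc k) = Some t'" "t' \<le> t + 1" by auto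
    then show ?thesis using t unfolding informed_since_def by auto
  qed
qed

lemma informed_since_source: "s \<le> k \<Longrightarrow> informed_since s k j"
  using source_index unfolding informed_since_def by auto

definition informed_nodes :: "nat \<Rightarrow> nat \<Rightarrow> nat set" where
  "informed_nodes s w = {i. i < N \<and> informed_since s (w * Tp) i}"

lemma window_pos: "1 \<le> Tp" using joint unfolding jointly_strongly_connected_def by auto

lemma informed_nodes_mono: "informed_nodes s w \<subseteq> informed_nodes s (Suc w)"
proof
  fix i assume "i \<in> informed_nodes s w"
  then show "i \<in> informed_nodes s (Suc w)" unfolding informed_nodes_def using informed_since_mono by auto
qed

lemma informed_nodes_grow:
  assumes sw: "s \<le> w * Tp" and ne: "informed_nodes s w \<noteq> {..<N}"
  shows "\<exists>b. b \<in> informed_nodes s (Suc w) \<and> b \<notin> informed_nodes s w"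
proof -
  have jS: "j \<in> informed_nodes s w" unfolding informed_nodes_def using j informed_since_source[OF sw] by auto
  have "informed_nodes s w \<subseteq> {..<N}" unfolding informed_nodes_def by auto
  with ne obtain i0 where i0: "i0 < N" "i0 \<notin> informed_nodes s w" by auto
  let ?R = "(\<Union>t \<in> {w*Tp..<(w+1)*Tp}. E t) \<inter> ({..<N} \<times> {..<N})"
  have "(j, i0) \<in> ?R\<^sup>*" using joint j i0(1) unfolding jointly_strongly_connected_def strongly_connected_def by blast
  from rtrancl_exits_set[OF this jS i0(2)] obtain a b where ab: "(a,b) \<in> ?R" "a \<in> informed_nodes s w" "b \<notin> informed_nodes s w" by blast
  then obtain t where t: "t \<in> {w*Tp..<(w+1)*Tp}" "(a,b) \<in> E t" "a < N" "b < N" by auto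
  have "a \<noteq> b" using ab by auto
  hence l: "a \<in> nbrs N E t b" using t unfolding nbrs_def by auto
  have ga: "informed_since s t a" using ab(2) t(1) informed_since_mono[of a s "w*Tp" t] unfolding informed_nodes_def by auto
  have "informed_since s (Suc t) b" by (rule informed_since_neighbour[OF t(4) l ga])
  hence "informed_since s (Suc w * Tp) b" by (rule informed_since_mono[OF t(4)], use t(1) in auto)
  hence "b \<in> informed_nodes s (Suc w)" using t(4) unfolding informed_nodes_def by auto
  with ab(3) show ?thesis by blast
qed

lemma card_informed_nodes:
  assumes sw: "s \<le> w * Tp"
  shows "min N (d + 1) \<le> card (informed_nodes s (w + d))"
proof (induction d)
  case 0
  have "j \<in> informed_nodes s w" unfolding informed_nodes_def using j informed_since_source[OF sw] by auto
  moreover have "finite (informed_nodes s w)" unfolding informed_nodes_def by auto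
  ultimately have "1 \<le> card (informed_nodes s w)" by (metis One_nat_def Suc_leI card_gt_0_iff empty_iff)
  then show ?case by simp
next
  case (Suc d)
  have fin: "finite (informed_nodes s (w + Suc d))" unfolding informed_nodes_def by auto
  have sub: "informed_nodes s (w + d) \<subseteq> informed_nodes s (w + Suc d)" using informed_nodes_mono[of s "w + d"] by simp
  show ?case
  proof (cases "informed_nodes s (w + d) = {..<N}")
    case True
    then have "card (informed_nodes s (w + d)) = N" by simp
    moreover have "card (informed_nodes s (w + d)) \<le> card (informed_nodes s (w + Suc d))" by (rule card_mono[OF fin sub])
    ultimately show ?thesis by simp
  next
    case False
    have "s \<le> (w + d) * Tp" using sw by (metis add_mult_distrib le_add1 order_trans)
    from informed_nodes_grow[OF this False] obtain b where b: "b \<in> informed_nodes s (Suc (w + d))" "b \<notin> informed_nodes s (w + d)" by blast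
    have "informed_nodes s (w + d) \<subset> informed_nodes s (w + Suc d)" using sub b by auto
    hence "card (informed_nodes s (w + d)) < card (informed_nodes s (w + Suc d))" by (rule psubset_card_mono[OF fin])
    then show ?thesis using Suc.IH by simp
  qed
qed

lemma indices_eventually_fresh: "\<exists>K. \<forall>k\<ge>K. \<forall>i<N. \<exists>t. tau i k = Some t \<and> t + M \<le> k"
proof -
  have sw: "M * Tp \<le> M * Tp" by simp
  have "min N (N - 1 + 1) \<le> card (informed_nodes (M * Tp) (M + (N - 1)))" by (rule card_informed_nodes[OF sw])
  hence cN: "N \<le> card (informed_nodes (M * Tp) (M + (N - 1)))" using j by simp
  have sub: "informed_nodes (M * Tp) (M + (N - 1)) \<subseteq> {..<N}" unfolding informed_nodes_def by auto
  have eq: "informed_nodes (M * Tp) (M + (N - 1)) = {..<N}"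
    by (rule card_subset_eq[OF _ sub], simp, use cN card_mono[OF _ sub] in force)
  show ?thesis
  proof (rule exI[of _ "(M + (N - 1)) * Tp"], intro allI impI)
    fix k i assume k: "(M + (N - 1)) * Tp \<le> k" and i: "i < N"
    have "informed_since (M * Tp) ((M + (N - 1)) * Tp) i" using eq i unfolding informed_nodes_def by auto
    hence "informed_since (M * Tp) k i" by (rule informed_since_mono[OF i _ k])
    then obtain t where t: "tau i k = Some t" "t + M * Tp \<le> k" unfolding informed_since_def by auto
    moreover have MM: "M * 1 \<le> M * Tp" by (rule mult_le_mono2[OF window_pos])
    moreover have "t + M \<le> k" using t(2) MM by linarith
    ultimately show "\<exists>t. tau i k = Some t \<and> t + M \<le> k" by blast
  qed
qed

end

section \<open>Exactness of the estimates\<close>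

locale observer_run =
  fixes N n Tp :: nat and A :: "real mat" and Cs :: "nat \<Rightarrow> real mat" and r :: "nat \<Rightarrow> nat"
    and E :: "nat \<Rightarrow> (nat \<times> nat) set" and T Tinv :: "real mat" and ns :: "nat \<Rightarrow> nat"
    and L :: "nat \<Rightarrow> real mat" and z0 :: "real vec"
    and tau :: "nat \<Rightarrow> nat \<Rightarrow> nat \<Rightarrow> nat option" and zh :: "nat \<Rightarrow> nat \<Rightarrow> real vec"
  assumes A: "A \<in> carrier_mat n n"
    and C: "\<forall>i<N. Cs i \<in> carrier_mat (r i) n"
    and graph: "jointly_strongly_connected N E Tp"
    and T: "T \<in> carrier_mat n n" "Tinv \<in> carrier_mat n n" "T * Tinv = 1\<^sub>m n"
    and ns: "(\<Sum>j<N. ns j) = n"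
    and lowtri: "\<forall>j<N. \<forall>q<N. j < q \<longrightarrow> blk ns (Tinv * A * T) j q = 0\<^sub>m (ns j) (ns q)"
    and Cshape: "\<forall>i<N. \<forall>q<N. i < q \<longrightarrow> cblk ns (Cs i * T) q = 0\<^sub>m (r i) (ns q)"
    and Lc: "\<forall>j<N. L j \<in> carrier_mat (ns j) (r j)"
    and Lnil: "\<forall>j<N. (blk ns (Tinv * A * T) j j - L j * cblk ns (Cs j * T) j) ^\<^sub>m (ns j) = 0\<^sub>m (ns j) (ns j)"
    and z0: "z0 \<in> carrier_vec n"
    and run: "alg_run N n E ns (Tinv * A * T) (\<lambda>i. Cs i * T) L
                (\<lambda>i k. Cs i *\<^sub>v ((A ^\<^sub>m k) *\<^sub>v (T *\<^sub>v z0))) tau zh"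
begin

abbreviation "Ab \<equiv> Tinv * A * T"
abbreviation "z k \<equiv> (Ab ^\<^sub>m k) *\<^sub>v z0"
abbreviation "y i k \<equiv> Cs i *\<^sub>v ((A ^\<^sub>m k) *\<^sub>v (T *\<^sub>v z0))"

lemma Ab_carrier: "Ab \<in> carrier_mat n n" using A T by auto
lemma off_N: "off ns N = n" using ns by (simp add: off_def)
lemma z_carrier: "z k \<in> carrier_vec n" by (rule pow_mat_mult_vec_carrier[OF Ab_carrier z0])
lemma z_Suc: "z (Suc k) = Ab *\<^sub>v z k" by (rule pow_mat_Suc_mult_vec[OF Ab_carrier z0])

lemma T_mult_pow_Ab: "T * Ab ^\<^sub>m k = A ^\<^sub>m k * T"
proof (induction k)
  case 0 then show ?case using T A by simp
next
  case (Suc k)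
  have TTinv: "T * (Tinv * (A * T)) = A * T"
  proof -
    have "T * (Tinv * (A * T)) = (T * Tinv) * (A * T)"
      using assoc_mult_mat[of T n n Tinv n "A * T" n] A T by simp
    then show ?thesis using T(3) A T by simp
  qed
  have "T * Ab ^\<^sub>m Suc k = (T * Ab ^\<^sub>m k) * Ab" using T Ab_carrier by (simp add: assoc_mult_mat[of _ n n _ n _ n])
  also have "\<dots> = A ^\<^sub>m k * T * (Tinv * A * T)" using Suc by simp
  also have "A ^\<^sub>m k * T * (Tinv * A * T) = A ^\<^sub>m k * (T * (Tinv * (A * T)))"
    using A T by (simp add: assoc_mult_mat[of _ n n _ n _ n])
  also have "\<dots> = A ^\<^sub>m Suc k * T"
    unfolding TTinv using A T by (simp add: assoc_mult_mat[of _ n n _ n _ n])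
  finally show ?case .
qed

lemma x_eq_T_z: "(A ^\<^sub>m k) *\<^sub>v (T *\<^sub>v z0) = T *\<^sub>v z k"
proof -
  have "T *\<^sub>v z k = (T * Ab ^\<^sub>m k) *\<^sub>v z0" using T Ab_carrier z0 by (simp add: assoc_mult_mat_vec[of _ n n _ n])
  also have "\<dots> = (A ^\<^sub>m k * T) *\<^sub>v z0" unfolding T_mult_pow_Ab ..
  also have "\<dots> = (A ^\<^sub>m k) *\<^sub>v (T *\<^sub>v z0)" using A T z0 by (simp add: assoc_mult_mat_vec[of _ n n _ n])
  finally show ?thesis by simp
qed

lemma y_eq: "i < N \<Longrightarrow> y i k = (Cs i * T) *\<^sub>v z k"
  using C T z_carrier[of k] x_eq_T_z[of k] by (simp add: assoc_mult_mat_vec[of _ "r i" n _ n])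

lemma zh_carrier: "i < N \<Longrightarrow> zh i k \<in> carrier_vec n" using run unfolding alg_run_def by auto

lemma source_run: "j < N \<Longrightarrow> tau j j k = Some 0 \<and> source_update ns Ab (\<lambda>i. Cs i * T) L (\<lambda>i k. y i k) zh j k"
  using run unfolding alg_run_def by auto

lemma tau_init: "j < N \<Longrightarrow> i < N \<Longrightarrow> i \<noteq> j \<Longrightarrow> tau j i 0 = None"
  using run unfolding alg_run_def by auto

lemma nonsource_run: "j < N \<Longrightarrow> i < N \<Longrightarrow> i \<noteq> j \<Longrightarrow>
  (case tau j i k of
     None \<Rightarrow> (if Mset N E tau j i k \<noteq> {} then adopt_min N ns Ab tau zh (Mset N E tau j i k) j i k
              else tau j i (Suc k) = None \<and> open_loop ns Ab zh j i k)
   | Some t \<Rightarrow> (if {l \<in> Mset N E tau j i k. the (tau j l k) < t} \<noteq> {}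
              then adopt_min N ns Ab tau zh {l \<in> Mset N E tau j i k. the (tau j l k) < t} j i k
              else tau j i (Suc k) = Some (t + 1) \<and> open_loop ns Ab zh j i k))"
  using run unfolding alg_run_def Let_def by auto

lemma tau_Suc_le: "j < N \<Longrightarrow> i < N \<Longrightarrow> i \<noteq> j \<Longrightarrow> tau j i k = Some t \<Longrightarrow> \<exists>t'. tau j i (Suc k) = Some t' \<and> t' \<le> t + 1"
  using nonsource_run[of j i k] unfolding adopt_min_def by (auto split: if_splits)

lemma tau_Suc_le_neighbour: "j < N \<Longrightarrow> i < N \<Longrightarrow> i \<noteq> j \<Longrightarrow> l \<in> nbrs N E k i \<Longrightarrow> tau j l k = Some s \<Longrightarrow>
   \<exists>t'. tau j i (Suc k) = Some t' \<and> t' \<le> s + 1"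
proof -
  assume j: "j < N" and i: "i < N" and ij: "i \<noteq> j" and l: "l \<in> nbrs N E k i" and s: "tau j l k = Some s"
  have lM: "l \<in> Mset N E tau j i k" using l s unfolding Mset_def by auto
  note st = nonsource_run[OF j i ij, of k]
  show ?thesis
  proof (cases "tau j i k")
    case None
    have "Mset N E tau j i k \<noteq> {}" using lM by auto
    with st None have "adopt_min N ns Ab tau zh (Mset N E tau j i k) j i k" by auto
    then obtain u where u: "u \<in> Mset N E tau j i k" "\<forall>l'\<in>Mset N E tau j i k. the (tau j u k) \<le> the (tau j l' k)"
      "tau j i (Suc k) = Some (the (tau j u k) + 1)" unfolding adopt_min_def by auto
    have "the (tau j u k) \<le> s" using u(2) lM s by force
    then show ?thesis using u(3) by auto
  next
    case (Some t)
    show ?thesis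
    proof (cases "{l \<in> Mset N E tau j i k. the (tau j l k) < t} \<noteq> {}")
      case True
      with st Some have "adopt_min N ns Ab tau zh {l \<in> Mset N E tau j i k. the (tau j l k) < t} j i k" by auto
      then obtain u where u: "u \<in> {l \<in> Mset N E tau j i k. the (tau j l k) < t}"
        "\<forall>l'\<in>{l \<in> Mset N E tau j i k. the (tau j l k) < t}. the (tau j u k) \<le> the (tau j l' k)"
        "tau j i (Suc k) = Some (the (tau j u k) + 1)" unfolding adopt_min_def by auto
      have "the (tau j u k) \<le> s"
      proof (cases "s < t")
        case True then show ?thesis using u(2) lM s by force
      next
        case False then show ?thesis using u(1) by auto
      qed
      then show ?thesis using u(3) by auto
    next
      case False
      with st Some have "tau j i (Suc k) = Some (t + 1)" by auto
      moreover have "\<not> s < t" using False lM s by auto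
      ultimately show ?thesis by auto
    qed
  qed
qed

lemma tau_Suc_cases: "j < N \<Longrightarrow> i < N \<Longrightarrow> i \<noteq> j \<Longrightarrow> tau j i (Suc k) = Some t' \<Longrightarrow>
   (\<exists>u s. u < N \<and> tau j u k = Some s \<and> t' = s + 1 \<and> adopt ns Ab zh j i u k) \<or>
   (\<exists>t. tau j i k = Some t \<and> t' = t + 1 \<and> open_loop ns Ab zh j i k)"
proof -
  assume j: "j < N" and i: "i < N" and ij: "i \<noteq> j" and t': "tau j i (Suc k) = Some t'"
  note st = nonsource_run[OF j i ij, of k]
  have fromM: "\<exists>u s. u < N \<and> tau j u k = Some s \<and> t' = s + 1 \<and> adopt ns Ab zh j i u k"
    if "adopt_min N ns Ab tau zh S j i k" "S \<subseteq> Mset N E tau j i k" for S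
  proof -
    from that(1) obtain u where u: "u \<in> S" "tau j i (Suc k) = Some (the (tau j u k) + 1)" "adopt ns Ab zh j i u k"
      unfolding adopt_min_def by auto
    have uM: "u \<in> Mset N E tau j i k" using u(1) that(2) by auto
    then obtain s where s: "tau j u k = Some s" unfolding Mset_def by auto
    have "u < N" using uM unfolding Mset_def nbrs_def by auto
    thus ?thesis using u s t' by auto
  qed
  show ?thesis
  proof (cases "tau j i k")
    case None
    show ?thesis
    proof (cases "Mset N E tau j i k \<noteq> {}")
      case True
      with st None have "adopt_min N ns Ab tau zh (Mset N E tau j i k) j i k" by auto
      from fromM[OF this] show ?thesis by auto
    next
      case False
      with st None t' show ?thesis by auto
    qed
  next
    case (Some t)
    show ?thesis
    proof (cases "{l \<in> Mset N E tau j i k. the (tau j l k) < t} \<noteq> {}")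
      case True
      with st Some have "adopt_min N ns Ab tau zh {l \<in> Mset N E tau j i k. the (tau j l k) < t} j i k" by auto
      from fromM[OF this] show ?thesis by auto
    next
      case False
      with st Some t' show ?thesis by auto
    qed
  qed
qed

lemma z_block_Suc: "j < N \<Longrightarrow> subv ns (z (Suc k)) j = blk ns Ab j j *\<^sub>v subv ns (z k) j + coupling ns Ab (z k) j"
  unfolding z_Suc by (rule subv_mult_lower_block_triangular[OF Ab_carrier off_N _ _ z_carrier], use lowtri in auto)

lemma adopt_block_exact:
  assumes j: "j < N" and ad: "adopt ns Ab zh j i u k" and eu: "subv ns (zh u k) j = subv ns (z k) j"
    and ei: "\<And>q. q < j \<Longrightarrow> subv ns (zh i k) q = subv ns (z k) q"
  shows "subv ns (zh i (Suc k)) j = subv ns (z (Suc k)) j"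
  using ad coupling_cong[OF ei, where M = Ab] unfolding adopt_def z_block_Suc[OF j] eu by simp

lemma open_loop_block_exact:
  assumes j: "j < N" and ad: "open_loop ns Ab zh j i k" and eu: "subv ns (zh i k) j = subv ns (z k) j"
    and ei: "\<And>q. q < j \<Longrightarrow> subv ns (zh i k) q = subv ns (z k) q"
  shows "subv ns (zh i (Suc k)) j = subv ns (z (Suc k)) j"
  using ad coupling_cong[OF ei, where M = Ab] unfolding open_loop_def z_block_Suc[OF j] eu by simp

abbreviation "CT j \<equiv> Cs j * T"
abbreviation "Fj j \<equiv> blk ns Ab j j - L j * cblk ns (CT j) j"

lemma CT_carrier: "j < N \<Longrightarrow> CT j \<in> carrier_mat (r j) n" using C T by auto
lemma L_carrier: "j < N \<Longrightarrow> L j \<in> carrier_mat (ns j) (r j)" using Lc by auto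
lemma Cjj_carrier: "j < N \<Longrightarrow> cblk ns (CT j) j \<in> carrier_mat (r j) (ns j)"
  using cblk_carrier_mat[OF CT_carrier] .

lemma Fj_carrier: "j < N \<Longrightarrow> Fj j \<in> carrier_mat (ns j) (ns j)"
  using L_carrier Cjj_carrier by (intro minus_carrier_mat mult_carrier_mat) auto

lemma Fj_pow_zero:
  assumes j: "j < N"
  shows "ns j \<le> t \<Longrightarrow> Fj j ^\<^sub>m t = 0\<^sub>m (ns j) (ns j)"
proof (induction t rule: dec_induct)
  case base then show ?case using Lnil j by auto
next
  case (step t)
  then show ?case by (simp add: left_mult_zero_mat[OF Fj_carrier[OF j]])
qed

text \<open>Once the substates \<open>q < j\<close> are exact at the source, its error on substate \<open>j\<close> is driven
  by the nilpotent matrix \<open>A\<^sub>j\<^sub>j - L\<^sub>j C\<^sub>j\<^sub>j\<close> alone: the contributions of the other substates to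
  \<open>y\<^sub>j\<close> are cancelled by the correction terms of the source update.\<close>

lemma source_error_Suc:
  assumes j: "j < N" and lower: "\<And>q. q < j \<Longrightarrow> subv ns (zh j k) q = subv ns (z k) q"
  shows "subv ns (zh j (Suc k)) j - subv ns (z (Suc k)) j
    = Fj j *\<^sub>v (subv ns (zh j k) j - subv ns (z k) j)"
proof -
  let ?Ajj = "blk ns Ab j j" and ?Cjj = "cblk ns (CT j) j"
  let ?s = "subv ns (zh j k) j" and ?w = "subv ns (z k) j"
  let ?Sa = "coupling ns Ab (z k) j"
  let ?Sc = "finsum_vec TYPE(real) (r j) (\<lambda>q. cblk ns (CT j) q *\<^sub>v subv ns (z k) q) {..<j}"
  have Lj: "L j \<in> carrier_mat (ns j) (r j)" by (rule L_carrier[OF j])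
  have Cs_j: "Cs j \<in> carrier_mat (r j) n" using C j by auto
  have Cjj: "?Cjj \<in> carrier_mat (r j) (ns j)" by (rule Cjj_carrier[OF j])
  have Cq: "\<And>q. cblk ns (CT j) q \<in> carrier_mat (r j) (ns q)" by (rule cblk_carrier_mat[OF CT_carrier[OF j]])
  have Sc: "?Sc \<in> carrier_vec (r j)" by (rule finsum_vec_carrier) (use Cq Cs_j in auto)
  have "finsum_vec TYPE(real) (ns j) (\<lambda>q. (blk ns Ab j q - L j * cblk ns (CT j) q) *\<^sub>v subv ns (zh j k) q) {..<j}
     = finsum_vec TYPE(real) (ns j) (\<lambda>q. (blk ns Ab j q - L j * cblk ns (CT j) q) *\<^sub>v subv ns (z k) q) {..<j}"
    using lower Lj Cq Cs_j by (intro finsum_vec_cong) auto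
  also have "\<dots> = ?Sa - L j *\<^sub>v ?Sc"
    unfolding coupling_def by (rule finsum_vec_mult_minus_distrib[OF _ Lj, where m = ns]) (use Cq Cs_j in auto)
  finally have corr: "finsum_vec TYPE(real) (ns j)
      (\<lambda>q. (blk ns Ab j q - L j * cblk ns (CT j) q) *\<^sub>v subv ns (zh j k) q) {..<j} = ?Sa - L j *\<^sub>v ?Sc" .
  have y: "y j k = ?Cjj *\<^sub>v ?w + ?Sc"
    unfolding y_eq[OF j] by (rule mult_mat_vec_lower_block_cols[OF CT_carrier[OF j] off_N j _ z_carrier])
      (use Cshape j in auto)
  have zh: "subv ns (zh j (Suc k)) j = Fj j *\<^sub>v ?s + (?Sa - L j *\<^sub>v ?Sc) + L j *\<^sub>v (?Cjj *\<^sub>v ?w + ?Sc)"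
    using source_run[OF j] corr y unfolding source_update_def by simp
  have Fv: "(Fj j *\<^sub>v v) $ a = (?Ajj *\<^sub>v v) $ a - (L j *\<^sub>v (?Cjj *\<^sub>v v)) $ a"
    if v: "v \<in> carrier_vec (ns j)" and a: "a < ns j" for v a
    using Lj Cjj v a by (simp add: minus_mult_distrib_mat_vec[of _ "ns j" "ns j"] assoc_mult_mat_vec[OF Lj Cjj v])
  show ?thesis
  proof (rule eq_vecI)
    fix a assume "a < dim_vec (Fj j *\<^sub>v (?s - ?w))"
    then have a: "a < ns j" using Lj by simp
    have "L j *\<^sub>v (?Cjj *\<^sub>v ?w + ?Sc) = L j *\<^sub>v (?Cjj *\<^sub>v ?w) + L j *\<^sub>v ?Sc"
      by (rule mult_add_distrib_mat_vec[OF Lj _ Sc]) (use Cjj in auto)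
    then have "(L j *\<^sub>v (?Cjj *\<^sub>v ?w + ?Sc)) $ a = (L j *\<^sub>v (?Cjj *\<^sub>v ?w)) $ a + (L j *\<^sub>v ?Sc) $ a"
      using a Lj by simp
    moreover have "(Fj j *\<^sub>v (?s - ?w)) $ a = (Fj j *\<^sub>v ?s) $ a - (Fj j *\<^sub>v ?w) $ a"
      using mult_minus_distrib_mat_vec[OF Fj_carrier[OF j], of ?s ?w] Lj a by simp
    ultimately show "(subv ns (zh j (Suc k)) j - subv ns (z (Suc k)) j) $ a = (Fj j *\<^sub>v (?s - ?w)) $ a"
      unfolding zh z_block_Suc[OF j] using a Lj Sc Cjj Fv[of ?w a] by simp
  qed (use Lj in simp)
qed

lemma source_block_eventually_exact:
  assumes j: "j < N"
    and lower: "\<And>k q. K0 \<le> k \<Longrightarrow> q < j \<Longrightarrow> subv ns (zh j k) q = subv ns (z k) q"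
    and k: "K0 + ns j \<le> k"
  shows "subv ns (zh j k) j = subv ns (z k) j"
proof -
  let ?F = "Fj j"
  define d where "d = (\<lambda>k. subv ns (zh j k) j - subv ns (z k) j)"
  have dc: "d k \<in> carrier_vec (ns j)" for k unfolding d_def by simp
  have dK: "d (K0 + t) = ?F ^\<^sub>m t *\<^sub>v d K0" for t
  proof (induction t)
    case 0 then show ?case using dc[of K0] L_carrier[OF j] by simp
  next
    case (Suc t)
    have "d (Suc (K0 + t)) = ?F *\<^sub>v d (K0 + t)"
      unfolding d_def by (rule source_error_Suc[OF j]) (use lower in auto)
    then show ?case
      using Suc pow_mat_Suc_mult_vec[OF Fj_carrier[OF j] dc] by simp
  qed
  define t where "t = k - K0"
  have t: "k = K0 + t" "ns j \<le> t" using k unfolding t_def by auto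
  have dk: "d k = 0\<^sub>v (ns j)" unfolding t(1) dK Fj_pow_zero[OF j t(2)] using dc by simp
  show ?thesis
  proof (rule eq_vecI)
    fix a assume "a < dim_vec (subv ns (z k) j)"
    then show "subv ns (zh j k) j $ a = subv ns (z k) j $ a"
      using arg_cong[OF dk, of "\<lambda>x. x $ a"] by (simp add: d_def)
  qed simp
qed

text \<open>An estimate whose freshness index is \<open>t\<close> is the source estimate of \<open>t\<close> steps earlier,
  propagated through the exact dynamics of substate \<open>j\<close>.\<close>

lemma block_exact_if_index_old:
  assumes j: "j < N" and KM: "K0 \<le> M"
    and lower: "\<And>k i q. K0 \<le> k \<Longrightarrow> i < N \<Longrightarrow> q < j \<Longrightarrow> subv ns (zh i k) q = subv ns (z k) q"
    and source: "\<And>k. M \<le> k \<Longrightarrow> subv ns (zh j k) j = subv ns (z k) j"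
  shows "i < N \<Longrightarrow> tau j i k = Some t \<Longrightarrow> M + t \<le> k \<Longrightarrow> subv ns (zh i k) j = subv ns (z k) j"
proof (induction k arbitrary: i t)
  case 0
  then show ?case using source tau_init[OF j] by (cases "i = j") auto
next
  case (Suc k)
  show ?case
  proof (cases "i = j")
    case True then show ?thesis using source Suc.prems by auto
  next
    case False
    note cases = tau_Suc_cases[OF j Suc.prems(1) False Suc.prems(2)]
    then have "K0 \<le> k" using Suc.prems(3) KM by auto
    then have lower_i: "\<And>q. q < j \<Longrightarrow> subv ns (zh i k) q = subv ns (z k) q"
      using lower Suc.prems(1) by blast
    from cases show ?thesis
    proof (elim disjE exE conjE)
      fix u s assume u: "u < N" "tau j u k = Some s" "t = s + 1" "adopt ns Ab zh j i u k"
      have "subv ns (zh u k) j = subv ns (z k) j" using Suc.IH[OF u(1) u(2)] Suc.prems u by simp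
      then show ?thesis using lower_i by (intro adopt_block_exact[OF j u(4)]) auto
    next
      fix t0 assume t0: "tau j i k = Some t0" "t = t0 + 1" "open_loop ns Ab zh j i k"
      have "subv ns (zh i k) j = subv ns (z k) j" using Suc.IH[OF Suc.prems(1) t0(1)] Suc.prems t0 by simp
      then show ?thesis using lower_i by (intro open_loop_block_exact[OF j t0(3)]) auto
    qed
  qed
qed

lemma block_eventually_exact:
  assumes j: "j < N"
    and lower: "\<And>k i q. K0 \<le> k \<Longrightarrow> i < N \<Longrightarrow> q < j \<Longrightarrow> subv ns (zh i k) q = subv ns (z k) q"
  shows "\<exists>K. \<forall>k\<ge>K. \<forall>i<N. subv ns (zh i k) j = subv ns (z k) j"
proof -
  interpret freshness_indices N E Tp j "tau j"
    by unfold_locales (use graph j source_run[OF j] tau_Suc_le[OF j] tau_Suc_le_neighbour[OF j] in auto)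
  obtain K where K: "\<And>k i. K \<le> k \<Longrightarrow> i < N \<Longrightarrow> \<exists>t. tau j i k = Some t \<and> t + (K0 + ns j) \<le> k"
    using indices_eventually_fresh[of "K0 + ns j"] by blast
  have source: "subv ns (zh j k) j = subv ns (z k) j" if "K0 + ns j \<le> k" for k
    using that by (intro source_block_eventually_exact[of j K0]) (use j lower in auto)
  have "subv ns (zh i k) j = subv ns (z k) j" if k: "K \<le> k" and i: "i < N" for k i
  proof -
    obtain t where t: "tau j i k = Some t" "K0 + ns j + t \<le> k" using K[OF k i] by auto
    show ?thesis
      by (rule block_exact_if_index_old[of j K0 "K0 + ns j"])
        (use j lower source i t in auto)
  qed
  then show ?thesis by blast
qed

lemma blocks_eventually_exact:
  "jj \<le> N \<Longrightarrow> \<exists>K. \<forall>k\<ge>K. \<forall>i<N. \<forall>q<jj. subv ns (zh i k) q = subv ns (z k) q"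
proof (induction jj)
  case 0 then show ?case by simp
next
  case (Suc jj)
  then obtain K0 where K0: "\<And>k i q. K0 \<le> k \<Longrightarrow> i < N \<Longrightarrow> q < jj \<Longrightarrow> subv ns (zh i k) q = subv ns (z k) q"
    by auto
  have "jj < N" using Suc.prems by simp
  then obtain K1 where K1: "\<And>k i. K1 \<le> k \<Longrightarrow> i < N \<Longrightarrow> subv ns (zh i k) jj = subv ns (z k) jj"
  proof -
    have "\<exists>K. \<forall>k\<ge>K. \<forall>i<N. subv ns (zh i k) jj = subv ns (z k) jj"
      by (rule block_eventually_exact[OF \<open>jj < N\<close>]) (rule K0)
    then show ?thesis using that by blast
  qed
  have "subv ns (zh i k) q = subv ns (z k) q" if "max K0 K1 \<le> k" "i < N" "q < Suc jj" for k i q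
    using K0[of k i q] K1[of k i] that by (cases "q = jj") auto
  then show ?case by blast
qed

lemma estimates_eventually_exact: "\<exists>K. \<forall>k\<ge>K. \<forall>i<N. zh i k = z k"
proof -
  obtain K where K: "\<And>k i q. K \<le> k \<Longrightarrow> i < N \<Longrightarrow> q < N \<Longrightarrow> subv ns (zh i k) q = subv ns (z k) q"
    using blocks_eventually_exact[of N] by blast
  have "zh i k = z k" if "K \<le> k" "i < N" for k i
    by (rule vec_eq_if_blocks_eq[OF zh_carrier[OF that(2)] z_carrier off_N]) (use K that in simp)
  then show ?thesis by blast
qed

end

lemma vnorm_nonneg: "0 \<le> vnorm v" unfolding vnorm_def by (simp add: sum_nonneg)

lemma abs_index_le_vnorm: "b < dim_vec v \<Longrightarrow> \<bar>v $ b\<bar> \<le> vnorm v"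
proof -
  assume b: "b < dim_vec v"
  have "(v $ b)^2 \<le> (\<Sum>i<dim_vec v. (v $ i)^2)"
    by (rule member_le_sum[of b "{..<dim_vec v}" "\<lambda>i. (v $ i)^2"]) (use b in auto)
  hence "sqrt ((v $ b)^2) \<le> vnorm v" unfolding vnorm_def by (rule real_sqrt_le_mono)
  thus ?thesis by simp
qed

lemma sum_squares_le_square_sum_abs:
  "finite S \<Longrightarrow> (\<Sum>a\<in>S. (x a)^2) \<le> (\<Sum>a\<in>S. \<bar>x a\<bar>)^2" for x :: "'b \<Rightarrow> real"
proof (induction S rule: finite_induct)
  case empty then show ?case by simp
next
  case (insert y F)
  have s0: "0 \<le> (\<Sum>a\<in>F. \<bar>x a\<bar>)" by (rule sum_nonneg) auto
  have "(\<Sum>a\<in>insert y F. (x a)^2) \<le> (x y)^2 + (\<Sum>a\<in>F. \<bar>x a\<bar>)^2" using insert by simp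
  also have "\<dots> \<le> (\<bar>x y\<bar> + (\<Sum>a\<in>F. \<bar>x a\<bar>))^2"
    using s0 by (simp add: power2_eq_square algebra_simps)
  also have "\<dots> = (\<Sum>a\<in>insert y F. \<bar>x a\<bar>)^2" using insert by simp
  finally show ?case .
qed

lemma vnorm_le_sum_abs: "vnorm v \<le> (\<Sum>a<dim_vec v. \<bar>v $ a\<bar>)"
proof -
  have "vnorm v \<le> sqrt ((\<Sum>a<dim_vec v. \<bar>v $ a\<bar>)^2)"
    unfolding vnorm_def by (rule real_sqrt_le_mono, rule sum_squares_le_square_sum_abs) simp
  also have "\<dots> = (\<Sum>a<dim_vec v. \<bar>v $ a\<bar>)" by (simp add: sum_nonneg)
  finally show ?thesis .
qed

lemma vnorm_smult: "vnorm (c \<cdot>\<^sub>v v) = \<bar>c\<bar> * vnorm v"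
proof -
  have "(\<Sum>i<dim_vec v. ((c \<cdot>\<^sub>v v) $ i)^2) = c^2 * (\<Sum>i<dim_vec v. (v $ i)^2)"
    by (simp add: sum_distrib_left power_mult_distrib)
  then show ?thesis unfolding vnorm_def by (simp add: real_sqrt_mult)
qed

definition entry_abs_sum :: "real mat \<Rightarrow> real" where
  "entry_abs_sum M = (\<Sum>a<dim_row M. \<Sum>b<dim_col M. \<bar>M $$ (a,b)\<bar>)"

lemma vnorm_mult_le_entry_abs_sum:
  assumes M: "M \<in> carrier_mat ra cb" and v: "v \<in> carrier_vec cb"
  shows "vnorm (M *\<^sub>v v) \<le> entry_abs_sum M * vnorm v"
proof -
  have comp: "\<bar>(M *\<^sub>v v) $ a\<bar> \<le> (\<Sum>b<cb. \<bar>M $$ (a,b)\<bar>) * vnorm v" if a: "a < ra" for a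
  proof -
    have "\<bar>(M *\<^sub>v v) $ a\<bar> \<le> (\<Sum>b<cb. \<bar>M $$ (a,b) * v $ b\<bar>)"
      unfolding index_mult_mat_vec_sum[OF M v a] by (rule sum_abs)
    also have "\<dots> \<le> (\<Sum>b<cb. \<bar>M $$ (a,b)\<bar> * vnorm v)"
      using abs_index_le_vnorm[of _ v] v by (intro sum_mono) (simp add: abs_mult mult_left_mono)
    finally show ?thesis by (simp add: sum_distrib_right)
  qed
  have "vnorm (M *\<^sub>v v) \<le> (\<Sum>a<ra. \<bar>(M *\<^sub>v v) $ a\<bar>)" using vnorm_le_sum_abs[of "M *\<^sub>v v"] M by simp
  also have "\<dots> \<le> (\<Sum>a<ra. (\<Sum>b<cb. \<bar>M $$ (a,b)\<bar>) * vnorm v)" by (rule sum_mono) (use comp in auto)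
  also have "\<dots> = entry_abs_sum M * vnorm v" using M by (simp add: entry_abs_sum_def sum_distrib_right)
  finally show ?thesis .
qed

lemma mat_opnorm_bdd_above:
  assumes M: "M \<in> carrier_mat ra cb"
  shows "bdd_above {vnorm (M *\<^sub>v u) | u. u \<in> carrier_vec (dim_col M) \<and> vnorm u \<le> 1}"
proof (rule bdd_aboveI[of _ "entry_abs_sum M"])
  fix x assume "x \<in> {vnorm (M *\<^sub>v u) | u. u \<in> carrier_vec (dim_col M) \<and> vnorm u \<le> 1}"
  then obtain u where u: "x = vnorm (M *\<^sub>v u)" "u \<in> carrier_vec (dim_col M)" "vnorm u \<le> 1" by blast
  have l0: "0 \<le> entry_abs_sum M" unfolding entry_abs_sum_def by (intro sum_nonneg) auto
  have "x \<le> entry_abs_sum M * vnorm u" using vnorm_mult_le_entry_abs_sum[OF M, of u] u M by auto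
  also have "\<dots> \<le> entry_abs_sum M * 1" by (rule mult_left_mono[OF u(3) l0])
  finally show "x \<le> entry_abs_sum M" by simp
qed

lemma vnorm_mult_le_mat_opnorm:
  assumes M: "M \<in> carrier_mat ra cb" and v: "v \<in> carrier_vec cb"
  shows "vnorm (M *\<^sub>v v) \<le> mat_opnorm M * vnorm v"
proof (cases "vnorm v = 0")
  case True
  have "vnorm (M *\<^sub>v v) \<le> entry_abs_sum M * vnorm v" by (rule vnorm_mult_le_entry_abs_sum[OF M v])
  then show ?thesis using True vnorm_nonneg[of "M *\<^sub>v v"] by simp
next
  case False
  hence pos: "0 < vnorm v" using vnorm_nonneg[of v] by simp
  define u where "u = (1 / vnorm v) \<cdot>\<^sub>v v"
  have uc: "u \<in> carrier_vec (dim_col M)" using v M unfolding u_def by auto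
  have un: "vnorm u = 1" unfolding u_def vnorm_smult using pos by simp
  have "vnorm (M *\<^sub>v u) \<in> {vnorm (M *\<^sub>v u) | u. u \<in> carrier_vec (dim_col M) \<and> vnorm u \<le> 1}"
    using uc un by auto
  then have le: "vnorm (M *\<^sub>v u) \<le> mat_opnorm M"
    unfolding mat_opnorm_def by (rule cSup_upper[OF _ mat_opnorm_bdd_above[OF M]])
  have "M *\<^sub>v u = (1 / vnorm v) \<cdot>\<^sub>v (M *\<^sub>v v)" unfolding u_def by (rule mult_mat_vec[OF M v])
  then have "vnorm (M *\<^sub>v u) = vnorm (M *\<^sub>v v) / vnorm v" using pos by (simp add: vnorm_smult)
  with le have "vnorm (M *\<^sub>v v) / vnorm v \<le> mat_opnorm M" by simp
  then show ?thesis using pos by (simp add: divide_le_eq)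
qed

lemma mat_opnorm_nonneg:
  assumes M: "M \<in> carrier_mat ra cb"
  shows "0 \<le> mat_opnorm M"
proof -
  have "vnorm (0\<^sub>v (dim_col M)) = 0" by (simp add: vnorm_def)
  then have "vnorm (M *\<^sub>v 0\<^sub>v (dim_col M)) \<in>
      {vnorm (M *\<^sub>v u) | u. u \<in> carrier_vec (dim_col M) \<and> vnorm u \<le> 1}" by fastforce
  then have "vnorm (M *\<^sub>v 0\<^sub>v (dim_col M)) \<le> mat_opnorm M"
    unfolding mat_opnorm_def by (rule cSup_upper[OF _ mat_opnorm_bdd_above[OF M]])
  then show ?thesis using vnorm_nonneg[of "M *\<^sub>v 0\<^sub>v (dim_col M)"] by linarith
qed

lemma geometric_bound_if_eventually_zero:
  fixes e :: "nat \<Rightarrow> nat \<Rightarrow> real"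
  assumes rho: "0 < \<rho>" and zero: "\<And>i k. K \<le> k \<Longrightarrow> i < N \<Longrightarrow> e i k = 0"
  shows "\<exists>c \<ge> 0. \<forall>k. \<forall>i<N. e i k \<le> c * \<rho> ^ k"
proof -
  define c where "c = Max (insert 0 ((\<lambda>(i,k). e i k / \<rho> ^ k) ` ({..<N} \<times> {..<K})))"
  have fin: "finite (insert 0 ((\<lambda>(i,k). e i k / \<rho> ^ k) ` ({..<N} \<times> {..<K})))" by auto
  have c0: "0 \<le> c" unfolding c_def by (rule Max_ge[OF fin]) simp
  have "e i k \<le> c * \<rho> ^ k" if i: "i < N" for i k
  proof (cases "K \<le> k")
    case True then show ?thesis using zero[OF True i] c0 rho by simp
  next
    case False
    then have "e i k / \<rho> ^ k \<le> c" unfolding c_def using i by (intro Max_ge[OF fin]) auto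
    then show ?thesis using rho by (simp add: divide_le_eq)
  qed
  with c0 show ?thesis by blast
qed

context observer_run
begin

lemma geometric_error_bound:
  assumes rho: "0 < \<rho>"
  shows "\<exists>c \<ge> 0. \<forall>k. \<forall>i<N. vnorm (zh i k - z k) \<le> c * \<rho> ^ k \<and>
           vnorm (T *\<^sub>v zh i k - A ^\<^sub>m k *\<^sub>v (T *\<^sub>v z0)) \<le> mat_opnorm T * c * \<rho> ^ k"
proof -
  obtain K where K: "\<And>k i. K \<le> k \<Longrightarrow> i < N \<Longrightarrow> zh i k = z k" using estimates_eventually_exact by blast
  have "vnorm (zh i k - z k) = 0" if "K \<le> k" "i < N" for k i
  proof -
    have "zh i k - z k = 0\<^sub>v n" using K[OF that] z_carrier by (intro eq_vecI) auto
    then show ?thesis by (simp add: vnorm_def)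
  qed
  then have "\<exists>c \<ge> 0. \<forall>k. \<forall>i<N. vnorm (zh i k - z k) \<le> c * \<rho> ^ k"
    by (rule geometric_bound_if_eventually_zero[OF rho])
  then obtain c where c0: "0 \<le> c" and bound: "\<And>k i. i < N \<Longrightarrow> vnorm (zh i k - z k) \<le> c * \<rho> ^ k"
    by blast
  have "vnorm (T *\<^sub>v zh i k - A ^\<^sub>m k *\<^sub>v (T *\<^sub>v z0)) \<le> mat_opnorm T * (c * \<rho> ^ k)" if i: "i < N" for i k
  proof -
    have "T *\<^sub>v zh i k - A ^\<^sub>m k *\<^sub>v (T *\<^sub>v z0) = T *\<^sub>v (zh i k - z k)"
      unfolding x_eq_T_z using T zh_carrier[OF i] z_carrier by (simp add: mult_minus_distrib_mat_vec)
    then have "vnorm (T *\<^sub>v zh i k - A ^\<^sub>m k *\<^sub>v (T *\<^sub>v z0)) \<le> mat_opnorm T * vnorm (zh i k - z k)"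
      using vnorm_mult_le_mat_opnorm[OF T(1)] zh_carrier[OF i] z_carrier by simp
    also have "\<dots> \<le> mat_opnorm T * (c * \<rho> ^ k)"
      by (rule mult_left_mono[OF bound[OF i] mat_opnorm_nonneg[OF T(1)]])
    finally show ?thesis .
  qed
  with c0 bound show ?thesis by (auto simp: mult.assoc)
qed

end

lemma blockwise_deadbeat_gains:
  assumes C: "\<forall>i<N. Cs i \<in> carrier_mat (r i) n" and T: "T \<in> carrier_mat n n"
    and obs: "\<forall>j<N. observable (ns j) (blk ns Ab j j) (cblk ns (Cs j * T) j)"
  shows "\<exists>L. \<forall>j<N. L j \<in> carrier_mat (ns j) (r j) \<and>
           (blk ns Ab j j - L j * cblk ns (Cs j * T) j) ^\<^sub>m (ns j) = 0\<^sub>m (ns j) (ns j)"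
proof -
  have "\<exists>Lj \<in> carrier_mat (ns j) (r j). (blk ns Ab j j - Lj * cblk ns (Cs j * T) j) ^\<^sub>m (ns j)
      = 0\<^sub>m (ns j) (ns j)" if j: "j < N" for j
  proof -
    have "Cs j * T \<in> carrier_mat (r j) n" using C T j by auto
    then have "cblk ns (Cs j * T) j \<in> carrier_mat (r j) (ns j)" by (rule cblk_carrier_mat)
    moreover have "observable (ns j) (blk ns Ab j j) (cblk ns (Cs j * T) j)" using obs j by blast
    ultimately show ?thesis by (rule deadbeat_gain_exists[OF blk_carrier])
  qed
  then have "\<forall>j. \<exists>Lj. j < N \<longrightarrow> Lj \<in> carrier_mat (ns j) (r j) \<and>
      (blk ns Ab j j - Lj * cblk ns (Cs j * T) j) ^\<^sub>m (ns j) = 0\<^sub>m (ns j) (ns j)" by blast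
  from choice[OF this] show ?thesis by blast
qed

theorem theorem1:
  fixes N n Tp :: nat
    and A :: "real mat" and Cs :: "nat \<Rightarrow> real mat" and r :: "nat \<Rightarrow> nat"
    and E :: "nat \<Rightarrow> (nat \<times> nat) set"
    and T Tinv :: "real mat" and ns :: "nat \<Rightarrow> nat"
    and \<rho> :: real
  assumes A: "A \<in> carrier_mat n n"
    and C: "\<forall>i<N. Cs i \<in> carrier_mat (r i) n"
    and obs: "observable n A (stackC r Cs N n)"
    and graph: "jointly_strongly_connected N E Tp"
    and T: "T \<in> carrier_mat n n" "Tinv \<in> carrier_mat n n"
           "T * Tinv = 1\<^sub>m n" "Tinv * T = 1\<^sub>m n"
    and ns: "(\<Sum>j<N. ns j) = n"
    and lowtri: "\<forall>j<N. \<forall>q<N. j < q \<longrightarrow> blk ns (Tinv * A * T) j q = 0\<^sub>m (ns j) (ns q)"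
    and Cshape: "\<forall>i<N. \<forall>q<N. i < q \<longrightarrow> cblk ns (Cs i * T) q = 0\<^sub>m (r i) (ns q)"
    and blkobs: "\<forall>j<N. observable (ns j) (blk ns (Tinv * A * T) j j) (cblk ns (Cs j * T) j)"
    and rho: "0 < \<rho>" "\<rho> < 1"
  shows "\<exists>L :: nat \<Rightarrow> real mat. (\<forall>j<N. L j \<in> carrier_mat (ns j) (r j)) \<and>
     (\<forall>z0 tau zh. z0 \<in> carrier_vec n \<longrightarrow>
        (let Ab = Tinv * A * T;
             z = (\<lambda>k. (Ab ^\<^sub>m k) *\<^sub>v z0);
             x = (\<lambda>k. (A ^\<^sub>m k) *\<^sub>v (T *\<^sub>v z0));
             y = (\<lambda>i k. Cs i *\<^sub>v x k)
         in alg_run N n E ns Ab (\<lambda>i. Cs i * T) L y tau zh \<longrightarrow>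
            (\<exists>c \<ge> 0. \<forall>k \<ge> (2*N - 1) * (N - 1) * Tp. \<forall>i<N.
               vnorm (zh i k - z k) \<le> c * \<rho> ^ k \<and>
               vnorm (T *\<^sub>v zh i k - x k) \<le> mat_opnorm T * c * \<rho> ^ k)))"
proof -
  obtain L where L: "\<forall>j<N. L j \<in> carrier_mat (ns j) (r j) \<and>
      (blk ns (Tinv * A * T) j j - L j * cblk ns (Cs j * T) j) ^\<^sub>m (ns j) = 0\<^sub>m (ns j) (ns j)"
    using blockwise_deadbeat_gains[OF C T(1) blkobs] by blast
  show ?thesis unfolding Let_def
  proof (rule exI[of _ L], intro conjI allI impI)
    show "L j \<in> carrier_mat (ns j) (r j)" if "j < N" for j using L that by blast
  next
    fix z0 tau zh
    assume z0: "z0 \<in> carrier_vec n" and run: "alg_run N n E ns (Tinv * A * T) (\<lambda>i. Cs i * T) L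
      (\<lambda>i k. Cs i *\<^sub>v (A ^\<^sub>m k *\<^sub>v (T *\<^sub>v z0))) tau zh"
    interpret observer_run N n Tp A Cs r E T Tinv ns L z0 tau zh
      using A C graph T ns lowtri Cshape L z0 run by unfold_locales auto
    obtain c where "0 \<le> c" and "\<forall>k. \<forall>i<N. vnorm (zh i k - (Tinv * A * T) ^\<^sub>m k *\<^sub>v z0) \<le> c * \<rho> ^ k \<and>
        vnorm (T *\<^sub>v zh i k - A ^\<^sub>m k *\<^sub>v (T *\<^sub>v z0)) \<le> mat_opnorm T * c * \<rho> ^ k"
      using geometric_error_bound[OF rho(1)] by blast
    then show "\<exists>c \<ge> 0. \<forall>k \<ge> (2*N - 1) * (N - 1) * Tp. \<forall>i<N.
        vnorm (zh i k - (Tinv * A * T) ^\<^sub>m k *\<^sub>v z0) \<le> c * \<rho> ^ k \<and>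
        vnorm (T *\<^sub>v zh i k - A ^\<^sub>m k *\<^sub>v (T *\<^sub>v z0)) \<le> mat_opnorm T * c * \<rho> ^ k"
      by blast
  qed
qed

end
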